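(* For every positive integer $t$ there is a constant $C_t$ such that for every $d\ge1$, with $k=d+1$, $U=\{u_1,\dots,u_d\}$ the vertex set of a complete graph and $L$ a $t$-feasible list assignment of $U$, we have $\tau(\mathcal{L}^L_{\mathrm{int}})\leq C_t\,\tau(\mathcal{L}^L_{\mathrm{unif}})$.
   Context: Lists $L(u)\subseteq[d+1]$; an $L$-colouring is an injective $\alpha:U\to[d+1]$ with $\alpha(u)\in L(u)$; $\Omega^L_U$ is their set. $L$ is $t$-feasible if $|L(u_i)|\ge t+1$ for $i\in[t]$ and $|L(u_i)|=d+1$ for $i\in[d]\setminus[t]$. A vertex $u$ is free if $|L(u)|=d+1$ and constrained otherwise. Add an extra vertex $w$ (regarded as free) and extend each $\alpha\in\Omega^L_U$ by letting $\alpha(w)$ be the unique colour of $[d+1]$ not in $\alpha(U)$. For $\alpha,\beta\in\Omega^L_U$ let $f(\alpha,\beta)$ be the permutation of $U\cup\{w\}$ with $f(x)=y$ iff $\alpha(x)=\beta(y)$; $(\alpha,\beta)$ is good if $f(\alpha,\beta)$ has no cycle of length at least $2$ all of whose vertices are constrained. $\mathcal{L}^L_{\mathrm{int}}$ is the continuous-time chain on $\Omega^L_U$ with rate $1/|\Omega^L_U|$ from $\sigma$ to $\eta\neq\sigma$ if $(\sigma,\eta)$ is good and $0$ otherwise; $\mathcal{L}^L_{\mathrm{unif}}$ has rate $1/|\Omega^L_U|$ between any two distinct states. $\tau=1/\mathrm{Gap}$, $\mathrm{Gap}$ being the second smallest eigenvalue of minus the generator. *)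

theory Defs
  imports "Jordan_Normal_Form.Char_Poly" "HOL-Library.FuncSet"
begin

text \<open>Vertices u_1..u_d are represented by the naturals 1..d, the extra vertex w by 0.
Colours [d+1] are 1..d+1.  A list assignment is L :: nat => nat set (values off 1..d are irrelevant).\<close>

definition colours :: "nat \<Rightarrow> nat set" where
  "colours d = {1..d+1}"

definition t_feasible :: "nat \<Rightarrow> nat \<Rightarrow> (nat \<Rightarrow> nat set) \<Rightarrow> bool" where
  "t_feasible t d L \<longleftrightarrow>
     (\<forall>i\<in>{1..d}. L i \<subseteq> colours d) \<and>
     (\<forall>i\<in>{1..d}. i \<le> t \<longrightarrow> card (L i) \<ge> t + 1) \<and>
     (\<forall>i\<in>{1..d}. t < i \<longrightarrow> card (L i) = d + 1)"

definition Omega :: "nat \<Rightarrow> (nat \<Rightarrow> nat set) \<Rightarrow> (nat \<Rightarrow> nat) set" where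
  "Omega d L = {\<alpha>. \<alpha> \<in> PiE {1..d} L \<and> inj_on \<alpha> {1..d}}"

definition constrained :: "nat \<Rightarrow> (nat \<Rightarrow> nat set) \<Rightarrow> nat \<Rightarrow> bool" where
  "constrained d L x \<longleftrightarrow> x \<in> {1..d} \<and> card (L x) \<noteq> d + 1"

definition ext_col :: "nat \<Rightarrow> (nat \<Rightarrow> nat) \<Rightarrow> nat \<Rightarrow> nat" where
  "ext_col d \<alpha> x = (if x = 0 then (THE c. c \<in> colours d - \<alpha> ` {1..d}) else \<alpha> x)"

definition perm_f :: "nat \<Rightarrow> (nat \<Rightarrow> nat) \<Rightarrow> (nat \<Rightarrow> nat) \<Rightarrow> nat \<Rightarrow> nat" where
  "perm_f d \<alpha> \<beta> x = (THE y. y \<in> {0..d} \<and> ext_col d \<alpha> x = ext_col d \<beta> y)"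

text \<open>(alpha,beta) is good if no cycle of length >= 2 of f has all vertices constrained.\<close>
definition good :: "nat \<Rightarrow> (nat \<Rightarrow> nat set) \<Rightarrow> (nat \<Rightarrow> nat) \<Rightarrow> (nat \<Rightarrow> nat) \<Rightarrow> bool" where
  "good d L \<alpha> \<beta> \<longleftrightarrow>
     \<not> (\<exists>x\<in>{0..d}. perm_f d \<alpha> \<beta> x \<noteq> x \<and>
          (\<forall>n. constrained d L ((perm_f d \<alpha> \<beta> ^^ n) x)))"

definition enum_states :: "'s set \<Rightarrow> 's list" where
  "enum_states S = (SOME xs. set xs = S \<and> distinct xs)"

definition minus_generator :: "'s set \<Rightarrow> ('s \<Rightarrow> 's \<Rightarrow> real) \<Rightarrow> real mat" where
  "minus_generator S r =
     (let xs = enum_states S; n = length xs in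
      mat n n (\<lambda>(i, j). if i = j then (\<Sum>k\<in>{0..<n} - {i}. r (xs ! i) (xs ! k))
                        else - r (xs ! i) (xs ! j)))"

definition spectral_gap :: "'s set \<Rightarrow> ('s \<Rightarrow> 's \<Rightarrow> real) \<Rightarrow> real" where
  "spectral_gap S r = sorted_list_of_multiset (proots (char_poly (minus_generator S r))) ! 1"

definition relax_time :: "'s set \<Rightarrow> ('s \<Rightarrow> 's \<Rightarrow> real) \<Rightarrow> real" where
  "relax_time S r = 1 / spectral_gap S r"

definition rate_int :: "nat \<Rightarrow> (nat \<Rightarrow> nat set) \<Rightarrow> (nat \<Rightarrow> nat) \<Rightarrow> (nat \<Rightarrow> nat) \<Rightarrow> real" where
  "rate_int d L \<sigma> \<eta> = (if \<sigma> \<noteq> \<eta> \<and> good d L \<sigma> \<eta> then 1 / real (card (Omega d L)) else 0)"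

definition rate_unif :: "nat \<Rightarrow> (nat \<Rightarrow> nat set) \<Rightarrow> (nat \<Rightarrow> nat) \<Rightarrow> (nat \<Rightarrow> nat) \<Rightarrow> real" where
  "rate_unif d L \<sigma> \<eta> = (if \<sigma> \<noteq> \<eta> then 1 / real (card (Omega d L)) else 0)"

end

theory Submission
  imports Defs "Jordan_Normal_Form.Schur_Decomposition"
begin

text \<open>Both generators are symmetric, so their spectra are real, and every nonzero eigenvalue e
  has an eigenvector u with zero sum such that e times the sum of the squares u(a)^2 is half the
  Dirichlet form, the sum over all pairs of r(a,b) (u(a) - u(b))^2.  For the uniform chain this
  forces e = 1, and the trace shows that 0 is a simple eigenvalue, so its relaxation time is 1.

  For the chain of good moves, any two colourings \<sigma>, \<eta> are joined by at least
  |\<Omega>| / (6t)^t two-step paths \<sigma>, \<gamma>, \<eta> of good moves.  Averaging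
  (u(\<sigma>) - u(\<eta>))^2 \<le> 2((u(\<sigma>) - u(\<gamma>))^2 + (u(\<gamma>) - u(\<eta>))^2) over these paths bounds
  the uniform Dirichlet form by 4(6t)^t times that of the good moves, hence every nonzero
  eigenvalue of the good-move chain is at least 1 / (4(6t)^t).

  A pair is good iff the digraph on the (at most t) constrained vertices with an arc x \<rightarrow> v
  whenever \<alpha>(x) = \<beta>(v) is acyclic.  Colouring the constrained vertices one at a time, each
  vertex x has at least |L(x)| - 3t colours keeping both digraphs acyclic, while the free
  vertices contribute the same number of extensions to every count.\<close>

section \<open>Real spectra of symmetric generators\<close>

definition trace_mat :: "'a::comm_ring_1 mat \<Rightarrow> 'a" where
  "trace_mat A = (\<Sum>i<dim_row A. A $$ (i,i))"

lemma trace_mat_mult_commute: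
  fixes X Y :: "'a::comm_ring_1 mat"
  assumes "X \<in> carrier_mat n n" "Y \<in> carrier_mat n n"
  shows "trace_mat (X * Y) = trace_mat (Y * X)"
proof -
  have expand: "trace_mat (A * B) = (\<Sum>i<n. \<Sum>k<n. A $$ (i,k) * B $$ (k,i))"
    if "A \<in> carrier_mat n n" "B \<in> carrier_mat n n" for A B :: "'a mat"
    using that by (simp add: trace_mat_def scalar_prod_def lessThan_atLeast0)
  show ?thesis
    unfolding expand[OF assms] expand[OF assms(2,1)]
    by (subst sum.swap) (simp add: mult.commute)
qed

lemma trace_mat_similar:
  fixes A B :: "'a::comm_ring_1 mat"
  assumes "similar_mat_wit A B P Q"
  shows "trace_mat A = trace_mat B"
proof -
  obtain n where c: "B \<in> carrier_mat n n" "P \<in> carrier_mat n n" "Q \<in> carrier_mat n n"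
    and QP: "Q * P = 1\<^sub>m n" and A: "A = P * B * Q"
    using assms unfolding similar_mat_wit_def Let_def by auto
  have "trace_mat A = trace_mat (P * (B * Q))" unfolding A using c by (simp add: assoc_mult_mat)
  also have "\<dots> = trace_mat (B * Q * P)" using c by (intro trace_mat_mult_commute[of _ n]) auto
  also have "B * Q * P = B" using c by (simp add: assoc_mult_mat[of B n n Q n P n] QP)
  finally show ?thesis .
qed

lemma vec_nonzero_entry:
  assumes "v \<in> carrier_vec n" "v \<noteq> 0\<^sub>v n"
  obtains i where "i < n" "v $ i \<noteq> 0"
  using assms eq_vecI[of v "0\<^sub>v n"] by auto

lemma real_symmetric_form_real:
  fixes A :: "real mat" and v :: "nat \<Rightarrow> complex"
  assumes A_sym: "\<And>i j. i < n \<Longrightarrow> j < n \<Longrightarrow> A $$ (i,j) = A $$ (j,i)"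
  shows "Im (\<Sum>i<n. \<Sum>j<n. cnj (v i) * of_real (A $$ (i,j)) * v j) = 0"
proof -
  let ?s = "\<Sum>i<n. \<Sum>j<n. cnj (v i) * of_real (A $$ (i,j)) * v j"
  have "cnj ?s = (\<Sum>i<n. \<Sum>j<n. v i * of_real (A $$ (i,j)) * cnj (v j))"
    by (simp add: cnj_sum)
  also have "\<dots> = (\<Sum>j<n. \<Sum>i<n. v i * of_real (A $$ (i,j)) * cnj (v j))"
    by (rule sum.swap)
  also have "\<dots> = ?s"
  proof (intro sum.cong refl)
    fix i j assume "i \<in> {..<n}" "j \<in> {..<n}"
    then show "v j * of_real (A $$ (j,i)) * cnj (v i) = cnj (v i) * of_real (A $$ (i,j)) * v j"
      using A_sym by (simp add: mult.commute mult.left_commute)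
  qed
  finally show ?thesis unfolding complex_is_Real_iff[symmetric] Reals_cnj_iff .
qed

lemma real_symmetric_eigenvalue_real:
  fixes A :: "real mat"
  assumes A: "A \<in> carrier_mat n n"
    and A_sym: "\<And>i j. i < n \<Longrightarrow> j < n \<Longrightarrow> A $$ (i,j) = A $$ (j,i)"
    and e: "eigenvalue (map_mat complex_of_real A) e"
  shows "Im e = 0"
proof -
  obtain v where v: "v \<in> carrier_vec n" "v \<noteq> 0\<^sub>v n"
    and Av: "map_mat complex_of_real A *\<^sub>v v = e \<cdot>\<^sub>v v"
    using e A unfolding eigenvalue_def eigenvector_def by auto
  have Av_i: "(\<Sum>j<n. of_real (A $$ (i,j)) * v $ j) = e * v $ i" if "i < n" for i
    using arg_cong[OF Av, of "\<lambda>w. w $ i"] A v that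
    by (simp add: scalar_prod_def lessThan_atLeast0)
  define w where "w = (\<Sum>i<n. (cmod (v $ i))\<^sup>2)"
  have "(\<Sum>i<n. \<Sum>j<n. cnj (v $ i) * of_real (A $$ (i,j)) * v $ j)
      = (\<Sum>i<n. cnj (v $ i) * (e * v $ i))"
    by (intro sum.cong refl) (simp add: mult.assoc Av_i flip: sum_distrib_left)
  also have "\<dots> = e * (\<Sum>i<n. cnj (v $ i) * v $ i)" by (simp add: sum_distrib_left mult_ac)
  also have "(\<Sum>i<n. cnj (v $ i) * v $ i) = of_real w" unfolding w_def of_real_sum
    by (intro sum.cong refl) (subst complex_norm_square, simp add: mult.commute)
  finally have "Im (e * of_real w) = 0"
    using real_symmetric_form_real[where n = n and A = A and v = "\<lambda>i. v $ i", OF A_sym] by simp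
  moreover obtain i where "i < n" "v $ i \<noteq> 0" using vec_nonzero_entry[OF v] .
  then have "w > 0" unfolding w_def by (intro sum_pos2[of _ i]) auto
  ultimately show ?thesis by simp
qed

interpretation of_real_poly_hom: map_poly_inj_idom_hom "of_real :: real \<Rightarrow> complex" ..

lemma real_symmetric_char_poly_factors:
  fixes A :: "real mat"
  assumes A: "A \<in> carrier_mat n n"
    and A_sym: "\<And>i j. i < n \<Longrightarrow> j < n \<Longrightarrow> A $$ (i,j) = A $$ (j,i)"
  obtains rs where "length rs = n" "char_poly A = (\<Prod>r\<leftarrow>rs. [:- r, 1:])"
    "sum_list rs = trace_mat A"
proof -
  let ?A = "map_mat complex_of_real A"
  have Ac: "?A \<in> carrier_mat n n" using A by simp
  obtain es where es: "char_poly ?A = (\<Prod>e\<leftarrow>es. [:- e, 1:])" "length es = n"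
    using char_poly_factorized[OF Ac] by blast
  have real_es: "e = of_real (Re e)" if "e \<in> set es" for e
  proof -
    have "poly (char_poly ?A) e = 0" unfolding es(1) poly_prod_list using that
      by (auto simp: prod_list_zero_iff)
    then have "eigenvalue ?A e" using eigenvalue_root_char_poly[OF Ac] by simp
    then show ?thesis using real_symmetric_eigenvalue_real[OF A A_sym] by (simp add: complex_eq_iff)
  qed
  define rs where "rs = map Re es"
  have es_rs: "es = map of_real rs" unfolding rs_def using real_es by (induct es) auto
  have "map_poly of_real (char_poly A) = char_poly ?A" using of_real_hom.char_poly_hom[OF A] by (rule sym)
  also have "\<dots> = (\<Prod>r\<leftarrow>rs. [:- of_real r, 1:])" by (simp add: es(1) es_rs comp_def)
  also have "\<dots> = map_poly of_real (\<Prod>r\<leftarrow>rs. [:- r, 1:])"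
    by (simp add: of_real_poly_hom.hom_prod_list comp_def)
  finally have char: "char_poly A = (\<Prod>r\<leftarrow>rs. [:- r, 1:])" by (simp add: of_real_poly_hom.eq_iff)
  obtain B P Q where sd: "schur_decomposition ?A es = (B,P,Q)" by (cases "schur_decomposition ?A es")
  with schur_decomposition[OF Ac es(1)] have sim: "similar_mat_wit ?A B P Q"
    and diag: "diag_mat B = es" by auto
  have "B \<in> carrier_mat n n" using similar_mat_witD2[OF Ac sim] by auto
  have "trace_mat ?A = trace_mat B" by (rule trace_mat_similar[OF sim])
  also have "\<dots> = sum_list es" unfolding diag[symmetric] diag_mat_def trace_mat_def
    by (simp add: sum_list_sum_nth atLeast0LessThan)
  finally have "trace_mat ?A = sum_list es" .
  moreover have "Re (sum_list es) = sum_list rs" unfolding rs_def by (induct es) auto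
  moreover have "Re (trace_mat ?A) = trace_mat A" using A by (simp add: trace_mat_def)
  ultimately have "sum_list rs = trace_mat A" by simp
  moreover have "length rs = n" using es(2) by (simp add: rs_def)
  ultimately show ?thesis using that char by blast
qed

lemma enum_states:
  assumes "finite S"
  shows "set (enum_states S) = S" "distinct (enum_states S)" "length (enum_states S) = card S"
proof -
  have "set (enum_states S) = S \<and> distinct (enum_states S)"
    unfolding enum_states_def by (rule someI_ex) (rule finite_distinct_list[OF assms])
  then show "set (enum_states S) = S" "distinct (enum_states S)" by auto
  then show "length (enum_states S) = card S" by (metis distinct_card)
qed

lemma sum_enum_states:
  assumes "finite S"
  shows "(\<Sum>i<card S. f (enum_states S ! i)) = (\<Sum>a\<in>S. f a)"
proof -
  have "bij_betw ((!) (enum_states S)) {..<card S} S"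
    using enum_states[OF assms] by (intro bij_betw_nth) auto
  from sum.reindex_bij_betw[OF this, of f] show ?thesis .
qed

lemma minus_generator_carrier:
  "minus_generator S r \<in> carrier_mat (length (enum_states S)) (length (enum_states S))"
  unfolding minus_generator_def Let_def by simp

lemma minus_generator_index:
  fixes r :: "'s \<Rightarrow> 's \<Rightarrow> real" and S :: "'s set"
  defines "xs \<equiv> enum_states S"
  assumes "i < length xs" "j < length xs"
  shows "minus_generator S r $$ (i,j) =
    (if i = j then (\<Sum>k\<in>{0..<length xs} - {i}. r (xs ! i) (xs ! k)) else - r (xs ! i) (xs ! j))"
  using assms unfolding minus_generator_def Let_def by simp

lemma minus_generator_symmetric:
  fixes r :: "'s \<Rightarrow> 's \<Rightarrow> real"
  assumes fin: "finite S" and r_sym: "\<And>a b. a \<in> S \<Longrightarrow> b \<in> S \<Longrightarrow> r a b = r b a"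
    and "i < card S" "j < card S"
  shows "minus_generator S r $$ (i,j) = minus_generator S r $$ (j,i)"
proof (cases "i = j")
  case False
  have "enum_states S ! k \<in> S" if "k < card S" for k
    using enum_states[OF fin] that by (metis nth_mem)
  then have "r (enum_states S ! i) (enum_states S ! j) = r (enum_states S ! j) (enum_states S ! i)"
    using assms(3,4) by (intro r_sym)
  then show ?thesis
    using assms(3,4) False minus_generator_index[of i S j r] minus_generator_index[of j S i r]
    by (simp add: enum_states[OF fin])
qed simp

lemma minus_generator_mult_vec:
  fixes r :: "'s \<Rightarrow> 's \<Rightarrow> real" and S :: "'s set"
  defines "xs \<equiv> enum_states S"
  assumes v: "v \<in> carrier_vec (length xs)" and i: "i < length xs"
  shows "(minus_generator S r *\<^sub>v v) $ i = (\<Sum>j<length xs. r (xs ! i) (xs ! j) * (v $ i - v $ j))"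
proof -
  let ?n = "length xs"
  let ?M = "minus_generator S r"
  have "(?M *\<^sub>v v) $ i = ?M $$ (i,i) * v $ i + (\<Sum>j\<in>{..<?n} - {i}. ?M $$ (i,j) * v $ j)"
    using v i minus_generator_carrier[of S r] sum.remove[of "{..<?n}" i]
    by (simp add: xs_def scalar_prod_def lessThan_atLeast0)
  also have "\<dots> = (\<Sum>j\<in>{..<?n} - {i}. r (xs ! i) (xs ! j) * (v $ i - v $ j))"
    using i minus_generator_index[of i S _ r]
    by (simp add: xs_def lessThan_atLeast0 right_diff_distrib sum_subtractf sum_distrib_right sum_negf)
  also have "\<dots> = (\<Sum>j<?n. r (xs ! i) (xs ! j) * (v $ i - v $ j))"
    using i by (subst (2) sum.remove[of _ i]) auto
  finally show ?thesis .
qed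

lemma sum_sum_symmetric_diff:
  fixes a :: "'i \<Rightarrow> 'i \<Rightarrow> real"
  assumes a_sym: "\<And>i j. i \<in> I \<Longrightarrow> j \<in> I \<Longrightarrow> a i j = a j i"
  shows "(\<Sum>i\<in>I. \<Sum>j\<in>I. a i j * (v i - v j)) = 0"
proof -
  let ?T = "\<Sum>i\<in>I. \<Sum>j\<in>I. a i j * (v i - v j)"
  have "?T = (\<Sum>j\<in>I. \<Sum>i\<in>I. a i j * (v i - v j))" by (rule sum.swap)
  also have "\<dots> = (\<Sum>j\<in>I. \<Sum>i\<in>I. - (a j i * (v j - v i)))"
    by (intro sum.cong refl) (simp add: a_sym algebra_simps)
  also have "\<dots> = - ?T" by (simp add: sum_negf)
  finally show ?thesis by simp
qed

lemma sum_sum_symmetric_dirichlet: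
  fixes a :: "'i \<Rightarrow> 'i \<Rightarrow> real"
  assumes a_sym: "\<And>i j. i \<in> I \<Longrightarrow> j \<in> I \<Longrightarrow> a i j = a j i"
  shows "(\<Sum>i\<in>I. v i * (\<Sum>j\<in>I. a i j * (v i - v j))) = (\<Sum>i\<in>I. \<Sum>j\<in>I. a i j * (v i - v j)\<^sup>2) / 2"
proof -
  let ?Q = "\<Sum>i\<in>I. \<Sum>j\<in>I. a i j * v i * (v i - v j)"
  have "?Q = (\<Sum>j\<in>I. \<Sum>i\<in>I. a i j * v i * (v i - v j))" by (rule sum.swap)
  also have "\<dots> = (\<Sum>i\<in>I. \<Sum>j\<in>I. a i j * v j * (v j - v i))"
  proof (intro sum.cong refl)
    fix i j assume "i \<in> I" "j \<in> I"
    then show "a j i * v j * (v j - v i) = a i j * v j * (v j - v i)" using a_sym by simp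
  qed
  finally have "2 * ?Q = ?Q + (\<Sum>i\<in>I. \<Sum>j\<in>I. a i j * v j * (v j - v i))" by simp
  also have "\<dots> = (\<Sum>i\<in>I. \<Sum>j\<in>I. a i j * (v i - v j)\<^sup>2)"
    by (simp add: sum.distrib[symmetric] power2_eq_square algebra_simps)
  finally show ?thesis by (simp add: sum_distrib_left mult_ac)
qed

lemma eigenvalue_dirichlet_form:
  fixes r :: "'s \<Rightarrow> 's \<Rightarrow> real"
  assumes fin: "finite S" and r_sym: "\<And>a b. a \<in> S \<Longrightarrow> b \<in> S \<Longrightarrow> r a b = r b a"
    and root: "poly (char_poly (minus_generator S r)) e = 0" and "e \<noteq> 0"
  obtains u :: "'s \<Rightarrow> real" where "(\<Sum>a\<in>S. u a) = 0" "(\<Sum>a\<in>S. (u a)\<^sup>2) > 0"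
    "e * (\<Sum>a\<in>S. (u a)\<^sup>2) = (\<Sum>a\<in>S. \<Sum>b\<in>S. r a b * (u a - u b)\<^sup>2) / 2"
proof -
  define xs where "xs = enum_states S"
  let ?M = "minus_generator S r"
  have xs: "set xs = S" "distinct xs" "length xs = card S" using enum_states[OF fin] xs_def by auto
  have M: "?M \<in> carrier_mat (card S) (card S)"
    using minus_generator_carrier[of S r] xs xs_def by simp
  with root have "eigenvalue ?M e" by (simp add: eigenvalue_root_char_poly)
  then obtain w where w: "w \<in> carrier_vec (card S)" "w \<noteq> 0\<^sub>v (card S)"
    and Mw: "?M *\<^sub>v w = e \<cdot>\<^sub>v w"
    using M unfolding eigenvalue_def eigenvector_def by auto
  define u where "u a = w $ inv_into {..<card S} ((!) xs) a" for a
  have "inj_on ((!) xs) {..<card S}" using xs by (simp add: inj_on_nth)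
  then have u_nth: "u (xs ! i) = w $ i" if "i < card S" for i
    using that by (simp add: u_def inv_into_f_f)
  have eigen: "e * u a = (\<Sum>b\<in>S. r a b * (u a - u b))" if a: "a \<in> S" for a
  proof -
    obtain i where i: "i < card S" "xs ! i = a" using a xs in_set_conv_nth[of a xs] by auto
    have "u a = w $ i" using u_nth[OF i(1)] i(2) by simp
    then have "e * u a = (?M *\<^sub>v w) $ i" using Mw w i(1) by simp
    also have "\<dots> = (\<Sum>j<card S. r (xs ! i) (xs ! j) * (w $ i - w $ j))"
      using minus_generator_mult_vec[of w S i r] w i xs by (simp add: xs_def)
    also have "\<dots> = (\<Sum>j<card S. r a (xs ! j) * (u a - u (xs ! j)))"
      using i u_nth by (intro sum.cong refl) auto
    also have "\<dots> = (\<Sum>b\<in>S. r a b * (u a - u b))"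
      using sum_enum_states[OF fin, of "\<lambda>b. r a b * (u a - u b)"] by (simp add: xs_def)
    finally show ?thesis .
  qed
  have "e * (\<Sum>a\<in>S. u a) = (\<Sum>a\<in>S. \<Sum>b\<in>S. r a b * (u a - u b))"
    unfolding sum_distrib_left using eigen by (rule sum.cong[OF refl])
  also have "\<dots> = 0" by (rule sum_sum_symmetric_diff) (rule r_sym)
  finally have centred: "(\<Sum>a\<in>S. u a) = 0" using \<open>e \<noteq> 0\<close> by simp
  have "e * (\<Sum>a\<in>S. (u a)\<^sup>2) = (\<Sum>a\<in>S. u a * (e * u a))"
    by (simp add: sum_distrib_left power2_eq_square mult_ac)
  also have "\<dots> = (\<Sum>a\<in>S. u a * (\<Sum>b\<in>S. r a b * (u a - u b)))"
    using eigen by (intro sum.cong refl) simp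
  also have "\<dots> = (\<Sum>a\<in>S. \<Sum>b\<in>S. r a b * (u a - u b)\<^sup>2) / 2"
    by (rule sum_sum_symmetric_dirichlet) (rule r_sym)
  finally have dirichlet: "e * (\<Sum>a\<in>S. (u a)\<^sup>2) = (\<Sum>a\<in>S. \<Sum>b\<in>S. r a b * (u a - u b)\<^sup>2) / 2" .
  obtain i where "i < card S" "w $ i \<noteq> 0" using vec_nonzero_entry[OF w] .
  then have "(\<Sum>a\<in>S. (u a)\<^sup>2) > 0"
    using fin xs u_nth by (intro sum_pos2[of _ "xs ! i"]) auto
  from centred this dirichlet show ?thesis by (rule that)
qed

lemma proots_prod_linear: "proots (\<Prod>r\<leftarrow>rs. [:- r, 1:]) = mset (rs :: 'a::idom list)"
proof (induct rs)
  case (Cons a rs)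
  have "(\<Prod>r\<leftarrow>rs. [:- r, 1:]) \<noteq> 0" by (auto simp: prod_list_zero_iff)
  then show ?case using Cons proots_mult[of "[:- a, 1:]" "\<Prod>r\<leftarrow>rs. [:- r, 1:]"] by simp
qed simp

lemma spectral_gap_sorted_eigenvalues:
  fixes r :: "'s \<Rightarrow> 's \<Rightarrow> real"
  assumes fin: "finite S" and r_sym: "\<And>a b. a \<in> S \<Longrightarrow> b \<in> S \<Longrightarrow> r a b = r b a"
  obtains rs where "length rs = card S" "spectral_gap S r = sort rs ! 1"
    "sum_list rs = trace_mat (minus_generator S r)"
    "\<And>x. x \<in> set rs \<Longrightarrow> poly (char_poly (minus_generator S r)) x = 0"
proof -
  let ?M = "minus_generator S r"
  have "?M \<in> carrier_mat (card S) (card S)"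
    using minus_generator_carrier[of S r] enum_states[OF fin] by simp
  from real_symmetric_char_poly_factors[OF this minus_generator_symmetric[OF fin r_sym]]
  obtain rs where rs: "length rs = card S" "char_poly ?M = (\<Prod>r\<leftarrow>rs. [:- r, 1:])"
    "sum_list rs = trace_mat ?M" by blast
  have "spectral_gap S r = sort rs ! 1"
    unfolding spectral_gap_def rs(2) proots_prod_linear by simp
  moreover have "poly (char_poly ?M) x = 0" if "x \<in> set rs" for x
    unfolding rs(2) poly_prod_list using that by (auto simp: prod_list_zero_iff)
  ultimately show ?thesis using that rs by blast
qed


lemma relax_time_le_inverse:
  fixes r :: "'s \<Rightarrow> 's \<Rightarrow> real"
  assumes fin: "finite S" and r_sym: "\<And>a b. a \<in> S \<Longrightarrow> b \<in> S \<Longrightarrow> r a b = r b a"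
    and "card S \<ge> 2" and "c > 0"
    and nonzero_ge: "\<And>x. poly (char_poly (minus_generator S r)) x = 0 \<Longrightarrow> x \<noteq> 0 \<Longrightarrow> c \<le> x"
  shows "relax_time S r \<le> 1 / c"
proof -
  obtain rs where rs: "length rs = card S" "spectral_gap S r = sort rs ! 1"
    "sum_list rs = trace_mat (minus_generator S r)"
    "\<And>x. x \<in> set rs \<Longrightarrow> poly (char_poly (minus_generator S r)) x = 0"
    by (rule spectral_gap_sorted_eigenvalues[where S = S and r = r, OF fin]) (use r_sym in auto)
  have "sort rs ! 1 \<in> set rs" using rs(1) \<open>card S \<ge> 2\<close> by (metis length_sort nth_mem set_sort Suc_1 Suc_le_lessD)
  then have "sort rs ! 1 = 0 \<or> c \<le> sort rs ! 1" using rs(4) nonzero_ge by blast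
  \<comment> \<open>a vanishing gap makes the relaxation time 1 / 0 = 0\<close>
  then show ?thesis using rs(2) \<open>c > 0\<close> unfolding relax_time_def by (auto simp: frac_le)
qed

section \<open>The uniform chain and two-step comparison\<close>

lemma sum_sum_sq_diff_centred:
  fixes v :: "'i \<Rightarrow> real"
  assumes "finite I" "(\<Sum>i\<in>I. v i) = 0"
  shows "(\<Sum>i\<in>I. \<Sum>j\<in>I. (v i - v j)\<^sup>2) = 2 * card I * (\<Sum>i\<in>I. (v i)\<^sup>2)"
proof -
  have "(\<Sum>i\<in>I. \<Sum>j\<in>I. (v i - v j)\<^sup>2) = (\<Sum>i\<in>I. \<Sum>j\<in>I. (v i)\<^sup>2 + (v j)\<^sup>2 - 2 * v i * v j)"
    by (intro sum.cong refl) (simp add: power2_eq_square algebra_simps)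
  also have "\<dots> = (\<Sum>i\<in>I. card I * (v i)\<^sup>2 + (\<Sum>j\<in>I. (v j)\<^sup>2) - 2 * v i * (\<Sum>j\<in>I. v j))"
    by (simp add: sum.distrib sum_subtractf sum_distrib_left mult.assoc)
  also have "\<dots> = 2 * card I * (\<Sum>i\<in>I. (v i)\<^sup>2)"
    using assms(2) by (simp add: sum.distrib sum_distrib_left mult.assoc)
  finally show ?thesis .
qed

lemma sorted_zero_one_nth_1:
  fixes ys :: "real list"
  assumes "sorted ys" "set ys \<subseteq> {0, 1}" "sum_list ys = length ys - 1" "length ys \<ge> 2"
  shows "ys ! 1 = 1"
proof (rule ccontr)
  assume "ys ! 1 \<noteq> 1"
  obtain a b zs where ys: "ys = a # b # zs"
    using assms(4) by (metis Suc_le_length_iff numeral_2_eq_2)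
  then have "b = 0" using \<open>ys ! 1 \<noteq> 1\<close> assms(2) by auto
  moreover have "a = 0" using assms(1,2) ys \<open>b = 0\<close> by auto
  moreover have "\<forall>z\<in>set zs. z \<le> 1" using assms(2) ys by auto
  then have "sum_list zs \<le> length zs" by (induct zs) auto
  ultimately show False using assms(3) ys by simp
qed

lemma trace_minus_generator_uniform:
  fixes r :: "'s \<Rightarrow> 's \<Rightarrow> real"
  assumes fin: "finite S" and "S \<noteq> {}"
    and r: "\<And>a b. r a b = (if a \<noteq> b then 1 / card S else 0)"
  shows "trace_mat (minus_generator S r) = card S - 1"
proof -
  define xs where "xs = enum_states S"
  let ?n = "card S"
  have xs: "distinct xs" "length xs = ?n" using enum_states[OF fin] by (auto simp: xs_def)
  have "trace_mat (minus_generator S r) = (\<Sum>i<?n. \<Sum>k\<in>{0..<?n} - {i}. r (xs ! i) (xs ! k))"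
    using minus_generator_carrier[of S r] minus_generator_index[of _ S _ r] xs
    unfolding trace_mat_def xs_def by (intro sum.cong) auto
  also have "\<dots> = (\<Sum>i<?n. \<Sum>k\<in>{0..<?n} - {i}. 1 / ?n)"
    using xs by (intro sum.cong refl) (auto simp: r nth_eq_iff_index_eq)
  also have "\<dots> = ?n - 1" using \<open>S \<noteq> {}\<close> fin by (simp add: of_nat_diff Suc_leI card_gt_0_iff)
  finally show ?thesis .
qed

lemma uniform_nonzero_eigenvalue:
  fixes r :: "'s \<Rightarrow> 's \<Rightarrow> real"
  assumes fin: "finite S" and r: "\<And>a b. r a b = (if a \<noteq> b then 1 / card S else 0)"
    and root: "poly (char_poly (minus_generator S r)) e = 0" and "e \<noteq> 0"
  shows "e = 1"
proof -
  have r_sym: "r a b = r b a" for a b by (simp add: r)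
  obtain u where centred: "(\<Sum>a\<in>S. u a) = 0" and pos: "(\<Sum>a\<in>S. (u a)\<^sup>2) > 0"
    and dirichlet: "e * (\<Sum>a\<in>S. (u a)\<^sup>2) = (\<Sum>a\<in>S. \<Sum>b\<in>S. r a b * (u a - u b)\<^sup>2) / 2"
    using eigenvalue_dirichlet_form[where S = S and r = r, OF fin _ root \<open>e \<noteq> 0\<close>] r_sym by blast
  have "(\<Sum>a\<in>S. \<Sum>b\<in>S. r a b * (u a - u b)\<^sup>2) = (\<Sum>a\<in>S. \<Sum>b\<in>S. (u a - u b)\<^sup>2 / card S)"
    by (intro sum.cong refl) (simp add: r)
  also have "\<dots> = (\<Sum>a\<in>S. \<Sum>b\<in>S. (u a - u b)\<^sup>2) / card S" by (simp add: sum_divide_distrib)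
  also have "\<dots> = 2 * (\<Sum>a\<in>S. (u a)\<^sup>2)"
    using sum_sum_sq_diff_centred[OF fin centred] pos fin by (auto simp: card_gt_0_iff)
  finally show ?thesis using dirichlet pos by simp
qed

lemma relax_time_uniform:
  fixes r :: "'s \<Rightarrow> 's \<Rightarrow> real"
  assumes fin: "finite S" and "card S \<ge> 2"
    and r: "\<And>a b. r a b = (if a \<noteq> b then 1 / card S else 0)"
  shows "relax_time S r = 1"
proof -
  obtain rs where rs: "length rs = card S" "spectral_gap S r = sort rs ! 1"
    "sum_list rs = trace_mat (minus_generator S r)"
    "\<And>x. x \<in> set rs \<Longrightarrow> poly (char_poly (minus_generator S r)) x = 0"
    by (rule spectral_gap_sorted_eigenvalues[where S = S and r = r, OF fin]) (auto simp: r)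
  have "S \<noteq> {}" using \<open>card S \<ge> 2\<close> by auto
  have "sort rs ! 1 = 1"
  proof (rule sorted_zero_one_nth_1)
    show "set (sort rs) \<subseteq> {0, 1}"
      using rs(4) uniform_nonzero_eigenvalue[OF fin r] by auto
    show "sum_list (sort rs) = length (sort rs) - 1"
      using rs(1,3) trace_minus_generator_uniform[OF fin \<open>S \<noteq> {}\<close> r]
      by (metis mset_sort sum_mset_sum_list length_sort)
  qed (use rs(1) \<open>card S \<ge> 2\<close> in auto)
  then show ?thesis using rs(2) by (simp add: relax_time_def)
qed

lemma sq_diff_le_two_step:
  fixes a b c :: real
  shows "(a - b)\<^sup>2 \<le> 2 * ((a - c)\<^sup>2 + (c - b)\<^sup>2)"
proof -
  have "0 \<le> (a - 2 * c + b)\<^sup>2" by simp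
  then show ?thesis by (simp add: power2_eq_square algebra_simps)
qed

lemma two_step_comparison:
  fixes G :: "'s \<Rightarrow> 's \<Rightarrow> bool" and h :: "'s \<Rightarrow> real" and K :: real
  assumes fin: "finite S" and "K \<ge> 0"
    and paths: "\<And>a b. a \<in> S \<Longrightarrow> b \<in> S \<Longrightarrow> card S \<le> K * card {c\<in>S. G a c \<and> G c b}"
  shows "(\<Sum>a\<in>S. \<Sum>b\<in>S. (h a - h b)\<^sup>2)
    \<le> 4 * K * (\<Sum>a\<in>S. \<Sum>b\<in>S. if G a b then (h a - h b)\<^sup>2 else 0)"
proof -
  define E where "E a b = (if G a b then (h a - h b)\<^sup>2 else 0)" for a b
  define out where "out a = (\<Sum>c\<in>S. E a c)" for a
  define into where "into b = (\<Sum>c\<in>S. E c b)" for b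
  have E_nonneg: "E a b \<ge> 0" for a b by (simp add: E_def)
  have pair: "card S * (h a - h b)\<^sup>2 \<le> 2 * K * (out a + into b)" if "a \<in> S" "b \<in> S" for a b
  proof -
    let ?C = "{c\<in>S. G a c \<and> G c b}"
    have "card S * (h a - h b)\<^sup>2 \<le> K * (card ?C * (h a - h b)\<^sup>2)"
      using paths[OF that] by (simp add: mult_right_mono flip: mult.assoc)
    also have "\<dots> \<le> K * (\<Sum>c\<in>?C. 2 * (E a c + E c b))"
      using sum_mono[of ?C "\<lambda>_. (h a - h b)\<^sup>2" "\<lambda>c. 2 * (E a c + E c b)"] sq_diff_le_two_step \<open>K \<ge> 0\<close>
      by (intro mult_left_mono) (auto simp: E_def)
    also have "\<dots> \<le> K * (\<Sum>c\<in>S. 2 * (E a c + E c b))"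
      using fin E_nonneg \<open>K \<ge> 0\<close> by (intro mult_left_mono sum_mono2) auto
    also have "\<dots> = 2 * K * (out a + into b)"
      by (simp add: out_def into_def sum.distrib sum_distrib_left mult_ac)
    finally show ?thesis .
  qed
  have "card S * (\<Sum>a\<in>S. \<Sum>b\<in>S. (h a - h b)\<^sup>2) = (\<Sum>a\<in>S. \<Sum>b\<in>S. card S * (h a - h b)\<^sup>2)"
    by (simp add: sum_distrib_left)
  also have "\<dots> \<le> (\<Sum>a\<in>S. \<Sum>b\<in>S. 2 * K * (out a + into b))"
    by (intro sum_mono pair)
  also have "\<dots> = 2 * K * (card S * sum out S + card S * sum into S)"
    by (simp add: distrib_left sum.distrib flip: sum_distrib_left)
  also have "sum into S = sum out S" unfolding out_def into_def by (rule sum.swap)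
  finally have "card S * (\<Sum>a\<in>S. \<Sum>b\<in>S. (h a - h b)\<^sup>2) \<le> card S * (4 * K * sum out S)"
    by (simp add: mult_ac)
  then show ?thesis by (cases "S = {}") (auto simp: E_def out_def fin card_gt_0_iff)
qed

lemma relax_time_two_step_bound:
  fixes r :: "'s \<Rightarrow> 's \<Rightarrow> real" and G :: "'s \<Rightarrow> 's \<Rightarrow> bool" and K :: real
  assumes fin: "finite S" and "card S \<ge> 2"
    and r: "\<And>a b. r a b = (if a \<noteq> b \<and> G a b then 1 / card S else 0)"
    and G_sym: "\<And>a b. a \<in> S \<Longrightarrow> b \<in> S \<Longrightarrow> G a b = G b a"
    and "K > 0"
    and paths: "\<And>a b. a \<in> S \<Longrightarrow> b \<in> S \<Longrightarrow> card S \<le> K * card {c\<in>S. G a c \<and> G c b}"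
  shows "relax_time S r \<le> 4 * K"
proof -
  have r_sym: "r a b = r b a" if "a \<in> S" "b \<in> S" for a b using G_sym[OF that] by (auto simp: r)
  have "relax_time S r \<le> 1 / (1 / (4 * K))"
  proof (rule relax_time_le_inverse[OF fin _ \<open>card S \<ge> 2\<close>])
    fix e assume root: "poly (char_poly (minus_generator S r)) e = 0" and "e \<noteq> 0"
    obtain u where centred: "(\<Sum>a\<in>S. u a) = 0" and pos: "(\<Sum>a\<in>S. (u a)\<^sup>2) > 0"
      and dirichlet: "e * (\<Sum>a\<in>S. (u a)\<^sup>2) = (\<Sum>a\<in>S. \<Sum>b\<in>S. r a b * (u a - u b)\<^sup>2) / 2"
      using eigenvalue_dirichlet_form[where S = S and r = r, OF fin _ root \<open>e \<noteq> 0\<close>] r_sym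
      by blast
    have "S \<noteq> {}" using \<open>card S \<ge> 2\<close> by auto
    have "(\<Sum>a\<in>S. \<Sum>b\<in>S. r a b * (u a - u b)\<^sup>2)
        = (\<Sum>a\<in>S. \<Sum>b\<in>S. (if G a b then (u a - u b)\<^sup>2 else 0) / card S)"
      by (intro sum.cong refl) (simp add: r)
    also have "\<dots> = (\<Sum>a\<in>S. \<Sum>b\<in>S. if G a b then (u a - u b)\<^sup>2 else 0) / card S"
      by (simp add: sum_divide_distrib)
    finally have "(\<Sum>a\<in>S. \<Sum>b\<in>S. if G a b then (u a - u b)\<^sup>2 else 0)
        = card S * (\<Sum>a\<in>S. \<Sum>b\<in>S. r a b * (u a - u b)\<^sup>2)"
      using \<open>S \<noteq> {}\<close> fin by simp
    also have "\<dots> = 2 * card S * (e * (\<Sum>a\<in>S. (u a)\<^sup>2))" using dirichlet by simp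
    finally have "(\<Sum>a\<in>S. \<Sum>b\<in>S. if G a b then (u a - u b)\<^sup>2 else 0)
        = 2 * card S * (e * (\<Sum>a\<in>S. (u a)\<^sup>2))" .
    then have "2 * card S * (\<Sum>a\<in>S. (u a)\<^sup>2) * 1 \<le> 2 * card S * (\<Sum>a\<in>S. (u a)\<^sup>2) * (4 * K * e)"
      using two_step_comparison[OF fin _ paths, of u] sum_sum_sq_diff_centred[OF fin centred] \<open>K > 0\<close>
      by (simp add: mult_ac)
    then have "1 \<le> 4 * K * e" using pos \<open>S \<noteq> {}\<close> fin
      by (subst (asm) mult_le_cancel_left_pos) (auto simp: card_gt_0_iff)
    then show "1 / (4 * K) \<le> e" using \<open>K > 0\<close> by (simp add: field_simps)
  qed (use r_sym \<open>K > 0\<close> in auto)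
  then show ?thesis by simp
qed

section \<open>Acyclic colour matchings\<close>

text \<open>The digraph on S with an arc x \<rightarrow> v (x \<noteq> v) whenever \<alpha> x = \<beta> v has no cycle,
  witnessed by a rank decreasing along arcs.  On the constrained vertices these arcs are those
  of the permutation f(\<alpha>, \<beta>), which is how goodness of a pair is captured.\<close>
definition acyclic_between :: "'a set \<Rightarrow> ('a \<Rightarrow> 'c) \<Rightarrow> ('a \<Rightarrow> 'c) \<Rightarrow> bool" where
  "acyclic_between S \<alpha> \<beta> \<longleftrightarrow> (\<exists>\<rho> :: 'a \<Rightarrow> nat. \<forall>x\<in>S. \<forall>v\<in>S. x \<noteq> v \<longrightarrow> \<alpha> x = \<beta> v \<longrightarrow> \<rho> v < \<rho> x)"

lemma acyclic_between_sym:
  assumes fin: "finite S" and "acyclic_between S \<alpha> \<beta>"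
  shows "acyclic_between S \<beta> \<alpha>"
proof -
  obtain \<rho> :: "'a \<Rightarrow> nat" where \<rho>: "\<And>x v. x \<in> S \<Longrightarrow> v \<in> S \<Longrightarrow> x \<noteq> v \<Longrightarrow> \<alpha> x = \<beta> v \<Longrightarrow> \<rho> v < \<rho> x"
    using assms(2) unfolding acyclic_between_def by blast
  define M where "M = (\<Sum>z\<in>S. \<rho> z)"
  have le_M: "\<rho> z \<le> M" if "z \<in> S" for z unfolding M_def using fin that by (intro member_le_sum) auto
  define \<sigma> where "\<sigma> z = M - \<rho> z" for z
  have "\<sigma> v < \<sigma> x" if "x \<in> S" "v \<in> S" "x \<noteq> v" "\<beta> x = \<alpha> v" for x v
    unfolding \<sigma>_def
  proof (rule diff_less_mono2)
    show "\<rho> x < \<rho> v" using \<rho>[OF that(2,1) _ that(4)[symmetric]] that(3) by blast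
    with le_M[OF that(2)] show "\<rho> x < M" by linarith
  qed
  then show ?thesis unfolding acyclic_between_def by blast
qed

lemma acyclic_between_cong:
  assumes "\<And>x. x \<in> S \<Longrightarrow> \<alpha> x = \<alpha>' x" "\<And>x. x \<in> S \<Longrightarrow> \<beta> x = \<beta>' x"
  shows "acyclic_between S \<alpha> \<beta> \<longleftrightarrow> acyclic_between S \<alpha>' \<beta>'"
  unfolding acyclic_between_def using assms by auto

lemma acyclic_between_insert_left:
  assumes fin: "finite S" and "y \<notin> S" and c: "c \<notin> \<alpha> ` S" and "acyclic_between S \<alpha> \<gamma>"
  shows "acyclic_between (insert y S) \<alpha> (\<gamma>(y := c))"
proof -
  obtain \<rho> :: "'a \<Rightarrow> nat" where \<rho>: "\<And>x v. x \<in> S \<Longrightarrow> v \<in> S \<Longrightarrow> x \<noteq> v \<Longrightarrow> \<alpha> x = \<gamma> v \<Longrightarrow> \<rho> v < \<rho> x"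
    using assms(4) unfolding acyclic_between_def by blast
  define \<sigma> where "\<sigma> x = (if x = y then Suc (\<Sum>z\<in>S. \<rho> z) else \<rho> x)" for x
  have "\<sigma> v < \<sigma> x"
    if "x \<in> insert y S" "v \<in> insert y S" "x \<noteq> v" "\<alpha> x = (\<gamma>(y := c)) v" for x v
  proof (cases "v = y")
    case True
    then show ?thesis using that c by auto
  next
    case False
    then have "v \<in> S" using that(2) by simp
    moreover have "\<rho> v \<le> (\<Sum>z\<in>S. \<rho> z)" using fin \<open>v \<in> S\<close> by (intro member_le_sum) auto
    ultimately show ?thesis using that False \<rho>[of x v] by (auto simp: \<sigma>_def)
  qed
  then show ?thesis unfolding acyclic_between_def by blast
qed

text \<open>Once y is coloured c, the vertex z with \<beta> z = c is reached from y, so for the remaining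
  vertices z plays the role of y: it takes over the colour \<beta> y.\<close>
definition redirect :: "('a \<Rightarrow> 'c) \<Rightarrow> 'a \<Rightarrow> 'c \<Rightarrow> 'a \<Rightarrow> 'c" where
  "redirect \<beta> y c x = (if \<beta> x = c then \<beta> y else \<beta> x)"

lemma inj_on_redirect:
  assumes "y \<notin> S" "inj_on \<beta> (insert y S)"
  shows "inj_on (redirect \<beta> y c) S"
  using assms unfolding inj_on_def redirect_def by (metis insert_iff)

lemma acyclic_between_insert_right:
  assumes "y \<notin> S" and inj: "inj_on \<beta> (insert y S)"
    and \<gamma>_c: "\<And>x. x \<in> S \<Longrightarrow> \<gamma> x \<noteq> c"
    and \<gamma>_y: "\<And>x. x \<in> S \<Longrightarrow> \<beta> x = c \<Longrightarrow> \<gamma> x \<noteq> \<beta> y"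
    and "acyclic_between S \<gamma> (redirect \<beta> y c)"
  shows "acyclic_between (insert y S) (\<gamma>(y := c)) \<beta>"
proof -
  obtain \<tau> :: "'a \<Rightarrow> nat"
    where \<tau>: "\<And>x v. x \<in> S \<Longrightarrow> v \<in> S \<Longrightarrow> x \<noteq> v \<Longrightarrow> \<gamma> x = redirect \<beta> y c v \<Longrightarrow> \<tau> v < \<tau> x"
    using assms(5) unfolding acyclic_between_def by blast
  have arc: "\<tau> v < \<tau> x" if "x \<in> S" "v \<in> S" "x \<noteq> v" "\<gamma> x = \<beta> v" for x v
    using \<tau>[OF that(1-3)] that(4) \<gamma>_c[OF that(1)] by (simp add: redirect_def)
  show ?thesis
  proof (cases "\<exists>z\<in>S. \<beta> z = c")
    case True
    then obtain z where z: "z \<in> S" "\<beta> z = c" by blast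
    have z_unique: "v = z" if "v \<in> S" "\<beta> v = c" for v
      using inj_onD[OF inj, of v z] that z by auto
    \<comment> \<open>an arc x \<rightarrow> y followed by the arc y \<rightarrow> z is contracted to the arc x \<rightarrow> z of the redirected colouring\<close>
    have arc_y: "\<tau> z < \<tau> x" if "x \<in> S" "\<gamma> x = \<beta> y" for x
      using \<tau>[OF that(1) z(1)] that \<gamma>_y[OF z] z by (auto simp: redirect_def)
    define \<sigma> where "\<sigma> x = (if x = y then 2 * \<tau> z + 1 else 2 * \<tau> x)" for x
    have "\<sigma> v < \<sigma> x"
      if "x \<in> insert y S" "v \<in> insert y S" "x \<noteq> v" "(\<gamma>(y := c)) x = \<beta> v" for x v
    proof -
      have "x \<in> S \<or> x = y" "v \<in> S \<or> v = y" using that(1,2) by auto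
      then show ?thesis
        using that z_unique[of v] arc_y[of x] arc[of x v] by (auto simp: \<sigma>_def)
    qed
    then show ?thesis unfolding acyclic_between_def by blast
  next
    case False
    define \<sigma> where "\<sigma> x = (if x = y then 0 else Suc (\<tau> x))" for x
    have "\<sigma> v < \<sigma> x"
      if "x \<in> insert y S" "v \<in> insert y S" "x \<noteq> v" "(\<gamma>(y := c)) x = \<beta> v" for x v
    proof -
      have "x \<in> S \<or> x = y" "v \<in> S \<or> v = y" using that(1,2) by auto
      then show ?thesis using that False arc[of x v] by (auto simp: \<sigma>_def)
    qed
    then show ?thesis unfolding acyclic_between_def by blast
  qed
qed

definition bridging_colourings ::
    "'a set \<Rightarrow> ('a \<Rightarrow> 'c set) \<Rightarrow> ('a \<Rightarrow> 'c) \<Rightarrow> ('a \<Rightarrow> 'c) \<Rightarrow> ('a \<Rightarrow> 'c) set" where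
  "bridging_colourings S L \<alpha> \<beta> =
     {\<gamma> \<in> PiE S L. inj_on \<gamma> S \<and> acyclic_between S \<alpha> \<gamma> \<and> acyclic_between S \<gamma> \<beta>}"

lemma finite_bridging_colourings:
  assumes "finite S" "\<And>x. x \<in> S \<Longrightarrow> finite (L x)"
  shows "finite (bridging_colourings S L \<alpha> \<beta>)"
proof -
  have "finite (PiE S L)" using assms by (intro finite_PiE) auto
  then show ?thesis unfolding bridging_colourings_def by (rule finite_subset[rotated]) auto
qed

definition residual_lists :: "('a \<Rightarrow> 'c set) \<Rightarrow> ('a \<Rightarrow> 'c) \<Rightarrow> 'a \<Rightarrow> 'c \<Rightarrow> 'a \<Rightarrow> 'c set" where
  "residual_lists L \<beta> y c x = L x - {c} - (if \<beta> x = c then {\<beta> y} else {})"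

lemma card_residual_lists:
  assumes "finite (L x)"
  shows "card (L x) \<le> card (residual_lists L \<beta> y c x) + 2"
    and "\<beta> x \<noteq> c \<Longrightarrow> card (L x) \<le> card (residual_lists L \<beta> y c x) + 1"
proof -
  have "card (L x) \<le> card (residual_lists L \<beta> y c x \<union> {c, \<beta> y})"
    using assms by (intro card_mono) (auto simp: residual_lists_def)
  moreover have "card {c, \<beta> y} \<le> 2" by (simp add: card_insert_if)
  ultimately show "card (L x) \<le> card (residual_lists L \<beta> y c x) + 2"
    using card_Un_le[of "residual_lists L \<beta> y c x" "{c, \<beta> y}"] by linarith
  assume "\<beta> x \<noteq> c"
  then have "card (L x) \<le> card (residual_lists L \<beta> y c x \<union> {c})"
    using assms by (intro card_mono) (auto simp: residual_lists_def)
  then show "card (L x) \<le> card (residual_lists L \<beta> y c x) + 1"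
    using card_Un_le[of "residual_lists L \<beta> y c x" "{c}"] by simp
qed

lemma extend_bridging_colouring:
  assumes fin: "finite S" and "y \<notin> S" "c \<in> L y" "c \<notin> \<alpha> ` S" and inj: "inj_on \<beta> (insert y S)"
    and \<gamma>: "\<gamma> \<in> bridging_colourings S (residual_lists L \<beta> y c) \<alpha> (redirect \<beta> y c)"
  shows "\<gamma>(y := c) \<in> bridging_colourings (insert y S) L \<alpha> \<beta>"
proof -
  have \<gamma>_res: "\<gamma> x \<in> residual_lists L \<beta> y c x" if "x \<in> S" for x
    using \<gamma> that unfolding bridging_colourings_def by auto
  then have \<gamma>_L: "\<gamma> x \<in> L x" and \<gamma>_c: "\<gamma> x \<noteq> c" and \<gamma>_y: "\<beta> x = c \<Longrightarrow> \<gamma> x \<noteq> \<beta> y"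
    if "x \<in> S" for x
    using \<gamma>_res[OF that] by (auto simp: residual_lists_def)
  have "\<gamma>(y := c) \<in> PiE (insert y S) L"
    using \<gamma> \<gamma>_L \<open>c \<in> L y\<close> \<open>y \<notin> S\<close> unfolding bridging_colourings_def by (auto simp: PiE_iff)
  moreover have "inj_on (\<gamma>(y := c)) (insert y S)"
  proof -
    have "c \<notin> \<gamma> ` S" using \<gamma>_c by auto
    moreover have "inj_on \<gamma> S" using \<gamma> unfolding bridging_colourings_def by blast
    ultimately show ?thesis using \<open>y \<notin> S\<close> by (auto simp: inj_on_fun_updI fun_upd_image)
  qed
  moreover have "acyclic_between (insert y S) \<alpha> (\<gamma>(y := c))"
    using \<gamma> fin \<open>y \<notin> S\<close> \<open>c \<notin> \<alpha> ` S\<close> unfolding bridging_colourings_def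
    by (intro acyclic_between_insert_left) auto
  moreover have "acyclic_between (insert y S) (\<gamma>(y := c)) \<beta>"
    using \<gamma> \<open>y \<notin> S\<close> inj \<gamma>_c \<gamma>_y unfolding bridging_colourings_def
    by (intro acyclic_between_insert_right) auto
  ultimately show ?thesis unfolding bridging_colourings_def by blast
qed

lemma inj_on_fun_upd_PiE:
  assumes "y \<notin> S"
  shows "inj_on (\<lambda>\<gamma>. \<gamma>(y := c)) (PiE S T)"
proof (rule inj_onI)
  fix \<gamma> \<gamma>' assume \<gamma>: "\<gamma> \<in> PiE S T" and \<gamma>': "\<gamma>' \<in> PiE S T" and eq: "\<gamma>(y := c) = \<gamma>'(y := c)"
  show "\<gamma> = \<gamma>'"
  proof
    fix x show "\<gamma> x = \<gamma>' x"
      using fun_cong[OF eq, of x] PiE_arb[OF \<gamma> assms] PiE_arb[OF \<gamma>' assms] by (cases "x = y") auto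
  qed
qed

lemma card_bridging_colourings_insert:
  assumes fin: "finite S" and "y \<notin> S" and fin_L: "\<And>x. x \<in> S \<Longrightarrow> finite (L x)"
    and inj: "inj_on \<beta> (insert y S)"
  shows "(\<Sum>c\<in>L y - \<alpha> ` S. card (bridging_colourings S (residual_lists L \<beta> y c) \<alpha> (redirect \<beta> y c)))
    \<le> card (bridging_colourings (insert y S) L \<alpha> \<beta>)"
proof (cases "finite (L y)")
  case True
  define B where "B c = bridging_colourings S (residual_lists L \<beta> y c) \<alpha> (redirect \<beta> y c)" for c
  define A where "A c = (\<lambda>\<gamma>. \<gamma>(y := c)) ` B c" for c
  have fin_B: "finite (B c)" for c
    unfolding B_def using fin fin_L by (intro finite_bridging_colourings) (auto simp: residual_lists_def)
  have "B c \<subseteq> PiE S (residual_lists L \<beta> y c)" for c unfolding B_def bridging_colourings_def by blast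
  then have "inj_on (\<lambda>\<gamma>. \<gamma>(y := c)) (B c)" for c
    by (rule inj_on_subset[OF inj_on_fun_upd_PiE[OF \<open>y \<notin> S\<close>, where T = "residual_lists L \<beta> y c"]])
  then have "(\<Sum>c\<in>L y - \<alpha> ` S. card (B c)) = (\<Sum>c\<in>L y - \<alpha> ` S. card (A c))"
    by (simp add: A_def card_image)
  also have "\<dots> = card (\<Union>c\<in>L y - \<alpha> ` S. A c)"
  proof (rule card_UN_disjoint[symmetric])
    show "finite (L y - \<alpha> ` S)" using True by blast
    show "\<forall>c\<in>L y - \<alpha> ` S. finite (A c)" unfolding A_def using fin_B by blast
    have "A c \<inter> A c' = {}" if "c \<noteq> c'" for c c'
      using that unfolding A_def by (auto dest: fun_cong[of _ _ y])
    then show "\<forall>c\<in>L y - \<alpha> ` S. \<forall>c'\<in>L y - \<alpha> ` S. c \<noteq> c' \<longrightarrow> A c \<inter> A c' = {}" by blast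
  qed
  also have "\<dots> \<le> card (bridging_colourings (insert y S) L \<alpha> \<beta>)"
  proof (rule card_mono)
    show "finite (bridging_colourings (insert y S) L \<alpha> \<beta>)"
      using fin fin_L True by (intro finite_bridging_colourings) auto
    show "(\<Union>c\<in>L y - \<alpha> ` S. A c) \<subseteq> bridging_colourings (insert y S) L \<alpha> \<beta>"
      using extend_bridging_colouring[OF fin \<open>y \<notin> S\<close> _ _ inj] unfolding A_def B_def by blast
  qed
  finally show ?thesis by (simp add: B_def)
next
  case False
  then have "infinite (L y - \<alpha> ` S)" using fin by (simp add: Diff_infinite_finite)
  then show ?thesis by simp
qed

lemma vertex_with_long_others:
  assumes "S \<noteq> {}"
    and pairs: "\<And>x x'. x \<in> S \<Longrightarrow> x' \<in> S \<Longrightarrow> x \<noteq> x' \<Longrightarrow> n < card (L x) \<or> n < card (L x')"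
  obtains y where "y \<in> S" "\<And>x. x \<in> S \<Longrightarrow> x \<noteq> y \<Longrightarrow> n < card (L x)"
proof (cases "\<exists>y\<in>S. card (L y) \<le> n")
  case True
  then obtain y where y: "y \<in> S" "card (L y) \<le> n" by blast
  have "n < card (L x)" if "x \<in> S" "x \<noteq> y" for x using pairs[of x y] that y by auto
  with y(1) show ?thesis by (rule that)
next
  case False
  obtain y where "y \<in> S" using assms(1) by blast
  then show ?thesis using False by (intro that[of y]) (auto simp: not_le)
qed

lemma residual_lists_long:
  assumes inj: "inj_on \<beta> S" and fin: "\<And>x. x \<in> S \<Longrightarrow> finite (L x)"
    and long: "\<And>x. x \<in> S \<Longrightarrow> Suc (card S) < card (L x)"
  shows "x \<in> S \<Longrightarrow> card S \<le> card (residual_lists L \<beta> y c x)"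
    and "x \<in> S \<Longrightarrow> x' \<in> S \<Longrightarrow> x \<noteq> x' \<Longrightarrow>
      card S < card (residual_lists L \<beta> y c x) \<or> card S < card (residual_lists L \<beta> y c x')"
proof -
  show "card S \<le> card (residual_lists L \<beta> y c x)" if "x \<in> S"
    using long[OF that] card_residual_lists(1)[where L = L and x = x and \<beta> = \<beta> and y = y and c = c]
      fin[OF that] by linarith
  have longer: "card S < card (residual_lists L \<beta> y c x)" if "x \<in> S" "\<beta> x \<noteq> c" for x
    using long[OF that(1)] card_residual_lists(2)[where L = L and x = x and \<beta> = \<beta> and y = y and c = c]
      fin[OF that(1)] that(2) by linarith
  show "card S < card (residual_lists L \<beta> y c x) \<or> card S < card (residual_lists L \<beta> y c x')"
    if "x \<in> S" "x' \<in> S" "x \<noteq> x'"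
  proof -
    have "\<beta> x \<noteq> c \<or> \<beta> x' \<noteq> c" using inj_onD[OF inj] that by metis
    then show ?thesis using longer that by blast
  qed
qed

lemma prod_max_one_residual_lists_le:
  assumes "\<And>x. x \<in> S \<Longrightarrow> finite (L x)"
  shows "(\<Prod>x\<in>S. max 1 (card (L x) - 3 * Suc (card S)))
    \<le> (\<Prod>x\<in>S. max 1 (card (residual_lists L \<beta> y c x) - 3 * card S))"
proof (rule prod_mono)
  fix x assume "x \<in> S"
  then show "0 \<le> max 1 (card (L x) - 3 * Suc (card S)) \<and>
      max 1 (card (L x) - 3 * Suc (card S)) \<le> max 1 (card (residual_lists L \<beta> y c x) - 3 * card S)"
    using card_residual_lists(1)[where L = L and x = x and \<beta> = \<beta> and y = y and c = c] assms[of x]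
    by auto
qed

lemma max_one_le_card_Diff_image:
  assumes "finite S" "Suc (card S) \<le> card A"
  shows "max 1 (card A - 3 * Suc (card S)) \<le> card (A - \<alpha> ` S)"
proof -
  have "max 1 (card A - 3 * Suc (card S)) \<le> card A - card (\<alpha> ` S)"
    using assms(2) card_image_le[OF assms(1), of \<alpha>] unfolding max_def by auto
  also have "\<dots> \<le> card (A - \<alpha> ` S)" using assms(1) by (intro diff_card_le_card_Diff) auto
  finally show ?thesis .
qed

lemma card_bridging_colourings_ge:
  fixes S :: "'a set" and L :: "'a \<Rightarrow> 'c set" and \<alpha> \<beta> :: "'a \<Rightarrow> 'c"
  assumes "finite S" "\<And>x. x \<in> S \<Longrightarrow> finite (L x)" "inj_on \<alpha> S" "inj_on \<beta> S"
    and "\<And>x. x \<in> S \<Longrightarrow> card S \<le> card (L x)"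
    and "\<And>x x'. x \<in> S \<Longrightarrow> x' \<in> S \<Longrightarrow> x \<noteq> x' \<Longrightarrow> card S < card (L x) \<or> card S < card (L x')"
  shows "(\<Prod>x\<in>S. max 1 (card (L x) - 3 * card S)) \<le> card (bridging_colourings S L \<alpha> \<beta>)"
  using assms
proof (induction "card S" arbitrary: S L \<alpha> \<beta>)
  case 0
  then show ?case by (simp add: bridging_colourings_def acyclic_between_def)
next
  case (Suc m)
  \<comment> \<open>colour first the (at most one) vertex whose list is not longer than card S\<close>
  obtain y where y: "y \<in> S" and long: "\<And>x. x \<in> S \<Longrightarrow> x \<noteq> y \<Longrightarrow> card S < card (L x)"
    by (rule vertex_with_long_others[of S "card S" L]) (use Suc.hyps(2) Suc.prems(6) in auto)
  define S' where "S' = S - {y}"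
  have S': "S = insert y S'" "y \<notin> S'" "finite S'" "card S' = m"
    using y Suc.hyps(2) Suc.prems(1) by (auto simp: S'_def)
  have card_S: "card S = Suc (card S')" using Suc.hyps(2) S'(4) by simp
  have fin_L: "finite (L x)" if "x \<in> S" for x using Suc.prems(2) that .
  have fin: "finite (L x)" if "x \<in> S'" for x
    using that unfolding S'_def by (intro fin_L) (rule DiffD1)
  have inj: "inj_on \<beta> S'" using Suc.prems(4) by (rule inj_on_subset) (auto simp: S'_def)
  have long': "Suc (card S') < card (L x)" if "x \<in> S'" for x
  proof -
    have "x \<in> S" "x \<noteq> y" using that unfolding S'_def by auto
    then have "card S < card (L x)" by (rule long)
    then show ?thesis using card_S by simp
  qed
  have IH: "(\<Prod>x\<in>S'. max 1 (card (L x) - 3 * card S))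
      \<le> card (bridging_colourings S' (residual_lists L \<beta> y c) \<alpha> (redirect \<beta> y c))" for c
  proof -
    have "(\<Prod>x\<in>S'. max 1 (card (L x) - 3 * card S))
        \<le> (\<Prod>x\<in>S'. max 1 (card (residual_lists L \<beta> y c x) - 3 * card S'))"
      unfolding card_S using fin by (rule prod_max_one_residual_lists_le)
    also have "\<dots> \<le> card (bridging_colourings S' (residual_lists L \<beta> y c) \<alpha> (redirect \<beta> y c))"
    proof (rule Suc.hyps(1))
      show "m = card S'" "finite S'" using S' by simp_all
      show "finite (residual_lists L \<beta> y c x)" if "x \<in> S'" for x
        using fin[OF that] by (simp add: residual_lists_def)
      show "inj_on \<alpha> S'" using Suc.prems(3) by (rule inj_on_subset) (auto simp: S'_def)
      show "inj_on (redirect \<beta> y c) S'" using Suc.prems(4) S' by (intro inj_on_redirect) auto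
      show "card S' \<le> card (residual_lists L \<beta> y c x)" if "x \<in> S'" for x
        by (rule residual_lists_long(1)[OF inj fin long' that])
      show "card S' < card (residual_lists L \<beta> y c x) \<or> card S' < card (residual_lists L \<beta> y c x')"
        if "x \<in> S'" "x' \<in> S'" "x \<noteq> x'" for x x'
        by (rule residual_lists_long(2)[OF inj fin long' that])
    qed
    finally show ?thesis .
  qed
  have first: "max 1 (card (L y) - 3 * card S) \<le> card (L y - \<alpha> ` S')"
    unfolding card_S using \<open>finite S'\<close> Suc.prems(5)[OF y, unfolded card_S]
    by (rule max_one_le_card_Diff_image)
  have "(\<Prod>x\<in>S. max 1 (card (L x) - 3 * card S))
      = max 1 (card (L y) - 3 * card S) * (\<Prod>x\<in>S'. max 1 (card (L x) - 3 * card S))"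
    using S' by simp
  also have "\<dots> \<le> card (L y - \<alpha> ` S') * (\<Prod>x\<in>S'. max 1 (card (L x) - 3 * card S))"
    using first by (rule mult_right_mono) simp
  also have "\<dots> = (\<Sum>c\<in>L y - \<alpha> ` S'. \<Prod>x\<in>S'. max 1 (card (L x) - 3 * card S))" by simp
  also have "\<dots> \<le> (\<Sum>c\<in>L y - \<alpha> ` S'. card (bridging_colourings S' (residual_lists L \<beta> y c) \<alpha> (redirect \<beta> y c)))"
    by (intro sum_mono IH)
  also have "\<dots> \<le> card (bridging_colourings S L \<alpha> \<beta>)"
    by (subst S'(1), rule card_bridging_colourings_insert) (use S' fin_L Suc.prems(4) in auto)
  finally show ?case .
qed

section \<open>List colourings of a complete graph\<close>

lemma prod_le_pow_mult_prod_max: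
  fixes s :: "'a \<Rightarrow> nat"
  assumes "card S \<le> t" "t \<ge> 1"
  shows "(\<Prod>x\<in>S. s x) \<le> (6 * t) ^ t * (\<Prod>x\<in>S. max 1 (s x - 3 * card S))"
proof -
  have factor: "s x \<le> 6 * t * max 1 (s x - 3 * card S)" for x
  proof (cases "s x \<le> 6 * t")
    case True
    then show ?thesis using le_trans[OF True, of "6 * t * max 1 (s x - 3 * card S)"] by simp
  next
    case False
    then have "s x \<le> 2 * (s x - 3 * card S)" using assms(1) by linarith
    also have "\<dots> \<le> 6 * t * max 1 (s x - 3 * card S)" using assms(2) by (intro mult_le_mono) auto
    finally show ?thesis .
  qed
  have "(\<Prod>x\<in>S. s x) \<le> (\<Prod>x\<in>S. 6 * t * max 1 (s x - 3 * card S))"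
    using factor by (intro prod_mono) auto
  also have "\<dots> = (6 * t) ^ card S * (\<Prod>x\<in>S. max 1 (s x - 3 * card S))"
    by (simp add: prod.distrib)
  also have "\<dots> \<le> (6 * t) ^ t * (\<Prod>x\<in>S. max 1 (s x - 3 * card S))"
    using assms by (intro mult_le_mono power_increasing) auto
  finally show ?thesis .
qed

lemma inj_on_override_on_PiE:
  assumes "F \<inter> A = {}"
  shows "inj_on (\<lambda>g. override_on g p A) (PiE F T)"
proof (rule inj_onI)
  fix g g' assume g: "g \<in> PiE F T" and g': "g' \<in> PiE F T"
    and eq: "override_on g p A = override_on g' p A"
  show "g = g'"
  proof
    fix x show "g x = g' x"
    proof (cases "x \<in> F")
      case True
      with assms have "x \<notin> A" by blast
      then show ?thesis using fun_cong[OF eq, of x] by simp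
    next
      case False
      then show ?thesis using PiE_arb[OF g False] PiE_arb[OF g' False] by simp
    qed
  qed
qed

definition constrained_vertices :: "nat \<Rightarrow> (nat \<Rightarrow> nat set) \<Rightarrow> nat set" where
  "constrained_vertices d L = {x. constrained d L x}"

definition constrained_colourings :: "nat \<Rightarrow> (nat \<Rightarrow> nat set) \<Rightarrow> (nat \<Rightarrow> nat) set" where
  "constrained_colourings d L =
     {p \<in> PiE (constrained_vertices d L) L. inj_on p (constrained_vertices d L)}"

text \<open>The number of injective extensions of a colouring of the m constrained vertices to
  the d - m free ones, which may use any of the d + 1 - m remaining colours.\<close>
definition free_extension_count :: "nat \<Rightarrow> (nat \<Rightarrow> nat set) \<Rightarrow> nat" where
  "free_extension_count d L =
     (\<Prod>i\<in>{0..<d - card (constrained_vertices d L)}. d + 1 - card (constrained_vertices d L) - i)"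

locale feasible_lists =
  fixes t d :: nat and L :: "nat \<Rightarrow> nat set"
  assumes feasible: "t_feasible t d L" and d_pos: "d \<ge> 1" and t_pos: "t \<ge> 1"
begin

abbreviation C :: "nat set" where "C \<equiv> constrained_vertices d L"

lemma L_subset_colours: "x \<in> {1..d} \<Longrightarrow> L x \<subseteq> colours d"
  using feasible unfolding t_feasible_def by auto

lemma finite_colours [simp]: "finite (colours d)" and card_colours [simp]: "card (colours d) = d + 1"
  unfolding colours_def by auto

lemma finite_L: "x \<in> {1..d} \<Longrightarrow> finite (L x)"
  by (rule finite_subset[OF L_subset_colours]) simp_all

lemma constrained_subset: "C \<subseteq> {1..d}"
  unfolding constrained_vertices_def constrained_def by auto

lemma finite_constrained: "finite C"
  by (rule finite_subset[OF constrained_subset]) simp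

lemma constrained_le_t:
  assumes "x \<in> C" shows "x \<le> t"
proof (rule ccontr)
  assume "\<not> x \<le> t"
  moreover have "x \<in> {1..d}" "card (L x) \<noteq> d + 1"
    using assms unfolding constrained_vertices_def constrained_def by auto
  ultimately show False using feasible unfolding t_feasible_def by auto
qed

lemma card_L_constrained: "x \<in> C \<Longrightarrow> t + 1 \<le> card (L x)"
  using feasible constrained_le_t constrained_subset unfolding t_feasible_def by auto

lemma card_constrained_le: "card C \<le> t"
proof -
  have "C \<subseteq> {1..t}" using constrained_le_t constrained_subset by auto
  then show ?thesis using card_mono[of "{1..t}" C] by simp
qed

lemma L_free: "x \<in> {1..d} \<Longrightarrow> x \<notin> C \<Longrightarrow> L x = colours d"
  using L_subset_colours[of x] finite_L[of x]
  unfolding constrained_vertices_def constrained_def by (intro card_subset_eq) auto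

lemma t_le_d: "t \<le> d"
proof -
  have "t + 1 \<le> card (L 1)" using feasible d_pos t_pos unfolding t_feasible_def by auto
  also have "\<dots> \<le> card (colours d)" using L_subset_colours[of 1] d_pos by (intro card_mono) auto
  finally show ?thesis by simp
qed

lemma card_constrained_less: "card C < d"
proof -
  have "d \<notin> C"
  proof
    assume "d \<in> C"
    then have "d = t" using constrained_le_t t_le_d by fastforce
    then have "d + 1 \<le> card (L d)" using card_L_constrained[OF \<open>d \<in> C\<close>] by simp
    moreover have "card (L d) \<le> d + 1"
      using L_subset_colours[of d] d_pos card_mono[of "colours d" "L d"] by simp
    ultimately show False
      using \<open>d \<in> C\<close> unfolding constrained_vertices_def constrained_def by simp
  qed
  then have "C \<subseteq> {1..d} - {d}" using constrained_subset by auto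
  then show ?thesis using card_mono[of "{1..d} - {d}" C] d_pos by simp
qed

lemma Omega_D:
  assumes "\<alpha> \<in> Omega d L"
  shows "inj_on \<alpha> {1..d}" "\<And>x. x \<in> {1..d} \<Longrightarrow> \<alpha> x \<in> L x" "\<alpha> \<in> extensional {1..d}"
  using assms unfolding Omega_def by (auto simp: PiE_iff)

lemma Omega_image_subset: "\<alpha> \<in> Omega d L \<Longrightarrow> \<alpha> ` {1..d} \<subseteq> colours d"
  using Omega_D(2) L_subset_colours by blast

lemma finite_Omega: "finite (Omega d L)"
proof -
  have "finite (PiE {1..d} L)" using finite_L by (intro finite_PiE) auto
  then show ?thesis unfolding Omega_def by (rule finite_subset[rotated]) auto
qed

lemma ext_col_0:
  assumes "\<alpha> \<in> Omega d L"
  shows "ext_col d \<alpha> 0 \<in> colours d - \<alpha> ` {1..d}"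
proof -
  have "card (\<alpha> ` {1..d}) = d" using Omega_D(1)[OF assms] by (simp add: card_image)
  then have "card (colours d - \<alpha> ` {1..d}) = 1"
    using Omega_image_subset[OF assms] by (simp add: card_Diff_subset finite_subset)
  then obtain c where c: "colours d - \<alpha> ` {1..d} = {c}" by (rule card_1_singletonE)
  then show ?thesis unfolding ext_col_def by simp
qed

lemma bij_betw_ext_col:
  assumes "\<alpha> \<in> Omega d L"
  shows "bij_betw (ext_col d \<alpha>) {0..d} (colours d)"
proof -
  have range: "ext_col d \<alpha> x \<in> colours d" if "x \<in> {0..d}" for x
    using that ext_col_0[OF assms] Omega_image_subset[OF assms] unfolding ext_col_def by auto
  have "inj_on (ext_col d \<alpha>) {0..d}"
  proof (rule inj_onI)
    fix x y assume xy: "x \<in> {0..d}" "y \<in> {0..d}" "ext_col d \<alpha> x = ext_col d \<alpha> y"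
    have zero_iff: "z = 0 \<longleftrightarrow> ext_col d \<alpha> z \<notin> \<alpha> ` {1..d}" if "z \<in> {0..d}" for z
      using that ext_col_0[OF assms] unfolding ext_col_def by auto
    have "x = 0 \<longleftrightarrow> y = 0" using zero_iff[OF xy(1)] zero_iff[OF xy(2)] xy(3) by simp
    show "x = y"
    proof (cases "x = 0")
      case True
      then show ?thesis using \<open>x = 0 \<longleftrightarrow> y = 0\<close> by simp
    next
      case False
      then have "\<alpha> x = \<alpha> y" "x \<in> {1..d}" "y \<in> {1..d}"
        using xy \<open>x = 0 \<longleftrightarrow> y = 0\<close> unfolding ext_col_def by auto
      then show ?thesis using inj_onD[OF Omega_D(1)[OF assms]] by blast
    qed
  qed
  moreover have "card (ext_col d \<alpha> ` {0..d}) = card (colours d)"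
    using calculation by (simp add: card_image)
  then have "ext_col d \<alpha> ` {0..d} = colours d"
    using range by (intro card_subset_eq) auto
  ultimately show ?thesis unfolding bij_betw_def by (intro conjI)
qed

lemma perm_f:
  assumes "\<alpha> \<in> Omega d L" "\<beta> \<in> Omega d L" "x \<in> {0..d}"
  shows "perm_f d \<alpha> \<beta> x \<in> {0..d}" "ext_col d \<alpha> x = ext_col d \<beta> (perm_f d \<alpha> \<beta> x)"
proof -
  have bij: "bij_betw (ext_col d \<beta>) {0..d} (colours d)" by (rule bij_betw_ext_col[OF assms(2)])
  have "ext_col d \<alpha> x \<in> colours d" by (rule bij_betw_apply[OF bij_betw_ext_col[OF assms(1)] assms(3)])
  then have "ext_col d \<alpha> x \<in> ext_col d \<beta> ` {0..d}" unfolding bij_betw_imp_surj_on[OF bij] .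
  then obtain y where y: "ext_col d \<alpha> x = ext_col d \<beta> y" "y \<in> {0..d}" by (rule imageE)
  have "\<exists>!y. y \<in> {0..d} \<and> ext_col d \<alpha> x = ext_col d \<beta> y"
  proof (rule ex1I[of _ y])
    fix y' assume "y' \<in> {0..d} \<and> ext_col d \<alpha> x = ext_col d \<beta> y'"
    then show "y' = y" using inj_onD[OF bij_betw_imp_inj_on[OF bij], of y' y] y by simp
  qed (use y in simp)
  then have "perm_f d \<alpha> \<beta> x \<in> {0..d} \<and> ext_col d \<alpha> x = ext_col d \<beta> (perm_f d \<alpha> \<beta> x)"
    unfolding perm_f_def by (rule theI')
  then show "perm_f d \<alpha> \<beta> x \<in> {0..d}" "ext_col d \<alpha> x = ext_col d \<beta> (perm_f d \<alpha> \<beta> x)"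
    by blast+
qed

lemma perm_f_eqI:
  assumes "\<alpha> \<in> Omega d L" "\<beta> \<in> Omega d L" "x \<in> {0..d}" "y \<in> {0..d}"
    and "ext_col d \<alpha> x = ext_col d \<beta> y"
  shows "perm_f d \<alpha> \<beta> x = y"
proof -
  have "ext_col d \<beta> (perm_f d \<alpha> \<beta> x) = ext_col d \<beta> y"
    using perm_f(2)[OF assms(1-3)] assms(5) by simp
  with bij_betw_imp_inj_on[OF bij_betw_ext_col[OF assms(2)]] show ?thesis
    using perm_f(1)[OF assms(1-3)] assms(4) by (rule inj_onD)
qed

lemma inj_on_perm_f:
  assumes "\<alpha> \<in> Omega d L" "\<beta> \<in> Omega d L"
  shows "inj_on (perm_f d \<alpha> \<beta>) {0..d}"
proof (rule inj_onI)
  fix x y assume xy: "x \<in> {0..d}" "y \<in> {0..d}" "perm_f d \<alpha> \<beta> x = perm_f d \<alpha> \<beta> y"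
  then have "ext_col d \<alpha> x = ext_col d \<alpha> y" using perm_f(2)[OF assms xy(1)] perm_f(2)[OF assms xy(2)] by simp
  with bij_betw_imp_inj_on[OF bij_betw_ext_col[OF assms(1)]] show "x = y"
    using xy(1,2) by (rule inj_onD)
qed

lemma perm_f_arc_iff:
  assumes "\<alpha> \<in> Omega d L" "\<beta> \<in> Omega d L" "x \<in> C" "v \<in> C"
  shows "perm_f d \<alpha> \<beta> x = v \<longleftrightarrow> \<alpha> x = \<beta> v"
proof -
  have "x \<in> {1..d}" "v \<in> {1..d}" using assms(3,4) constrained_subset by auto
  then have ext: "ext_col d \<alpha> x = \<alpha> x" "ext_col d \<beta> v = \<beta> v" by (auto simp: ext_col_def)
  show ?thesis
  proof
    assume "perm_f d \<alpha> \<beta> x = v"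
    then show "\<alpha> x = \<beta> v" using perm_f(2)[OF assms(1,2), of x] ext \<open>x \<in> {1..d}\<close> by simp
  next
    assume "\<alpha> x = \<beta> v"
    then show "perm_f d \<alpha> \<beta> x = v"
      using ext \<open>x \<in> {1..d}\<close> \<open>v \<in> {1..d}\<close> by (intro perm_f_eqI[OF assms(1,2)]) auto
  qed
qed

lemma good_imp_acyclic_between:
  assumes \<sigma>: "\<sigma> \<in> Omega d L" and \<eta>: "\<eta> \<in> Omega d L" and good: "good d L \<sigma> \<eta>"
  shows "acyclic_between C \<sigma> \<eta>"
proof -
  define f where "f = perm_f d \<sigma> \<eta>"
  define stops where "stops z n \<longleftrightarrow> \<not> ((f ^^ n) z \<in> C \<and> f ((f ^^ n) z) \<noteq> (f ^^ n) z)" for z n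
  \<comment> \<open>goodness makes every orbit of f leave C or stop, so the number of steps until then
    is a finite rank, and it drops by one along each arc\<close>
  define \<rho> where "\<rho> z = (LEAST n. stops z n)" for z
  have "\<rho> v < \<rho> x" if arc: "x \<in> C" "v \<in> C" "x \<noteq> v" "\<sigma> x = \<eta> v" for x v
  proof -
    have fx: "f x = v" unfolding f_def using perm_f_arc_iff[OF \<sigma> \<eta> arc(1,2)] arc(4) by simp
    have "x \<in> {0..d}" using arc(1) constrained_subset by auto
    moreover have "perm_f d \<sigma> \<eta> x \<noteq> x" using fx arc(3) unfolding f_def by simp
    ultimately obtain n where "\<not> constrained d L ((f ^^ n) x)"
      using good unfolding good_def f_def by blast
    then have "stops x n" unfolding stops_def constrained_vertices_def by simp
    moreover have "\<not> stops x 0" unfolding stops_def using arc fx by simp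
    ultimately have "\<rho> x = Suc (LEAST m. stops x (Suc m))" unfolding \<rho>_def by (rule Least_Suc)
    moreover have "stops x (Suc m) = stops v m" for m
      unfolding stops_def funpow_Suc_right comp_def fx ..
    ultimately show ?thesis unfolding \<rho>_def by simp
  qed
  then show ?thesis unfolding acyclic_between_def by blast
qed

lemma acyclic_between_imp_good:
  assumes \<sigma>: "\<sigma> \<in> Omega d L" and \<eta>: "\<eta> \<in> Omega d L" and acyclic: "acyclic_between C \<sigma> \<eta>"
  shows "good d L \<sigma> \<eta>"
proof (rule ccontr)
  assume "\<not> good d L \<sigma> \<eta>"
  then obtain x where x: "x \<in> {0..d}" "perm_f d \<sigma> \<eta> x \<noteq> x"
    and stays: "\<And>n. constrained d L ((perm_f d \<sigma> \<eta> ^^ n) x)" unfolding good_def by blast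
  define f where "f = perm_f d \<sigma> \<eta>"
  define a where "a n = (f ^^ n) x" for n
  obtain \<rho> :: "nat \<Rightarrow> nat"
    where \<rho>: "\<And>x v. x \<in> C \<Longrightarrow> v \<in> C \<Longrightarrow> x \<noteq> v \<Longrightarrow> \<sigma> x = \<eta> v \<Longrightarrow> \<rho> v < \<rho> x"
    using acyclic unfolding acyclic_between_def by blast
  have a_C: "a n \<in> C" for n using stays unfolding a_def f_def constrained_vertices_def by blast
  have a_range: "a n \<in> {0..d}" for n using a_C[of n] constrained_subset by auto
  have a_Suc: "a (Suc n) = f (a n)" for n unfolding a_def by simp
  have a_moves: "a n \<noteq> a (Suc n)" for n
  proof (induct n)
    case 0
    then show ?case using x(2) unfolding a_def f_def by simp
  next
    case (Suc n)
    have "f (a n) \<noteq> f (a (Suc n))"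
      using Suc inj_onD[OF inj_on_perm_f[OF \<sigma> \<eta>] _ a_range a_range] unfolding f_def by blast
    then show ?case using a_Suc by simp
  qed
  have "\<sigma> (a n) = \<eta> (a (Suc n))" for n
    using perm_f_arc_iff[OF \<sigma> \<eta> a_C[of n] a_C[of "Suc n"]] a_Suc[of n] unfolding f_def by simp
  then have descent: "\<rho> (a (Suc n)) < \<rho> (a n)" for n by (rule \<rho>[OF a_C a_C a_moves])
  have "\<rho> (a n) + n \<le> \<rho> (a 0)" for n
  proof (induct n)
    case (Suc n)
    then show ?case using descent[of n] by simp
  qed simp
  from this[of "Suc (\<rho> (a 0))"] show False by simp
qed

lemma good_iff_acyclic_between:
  assumes "\<sigma> \<in> Omega d L" "\<eta> \<in> Omega d L"
  shows "good d L \<sigma> \<eta> \<longleftrightarrow> acyclic_between C \<sigma> \<eta>"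
  using good_imp_acyclic_between[OF assms] acyclic_between_imp_good[OF assms] by blast

lemma good_sym:
  assumes "\<sigma> \<in> Omega d L" "\<eta> \<in> Omega d L"
  shows "good d L \<sigma> \<eta> \<longleftrightarrow> good d L \<eta> \<sigma>"
  using acyclic_between_sym[OF finite_constrained]
  unfolding good_iff_acyclic_between[OF assms] good_iff_acyclic_between[OF assms(2,1)] by blast


lemma restrict_in_constrained_colourings:
  assumes "\<alpha> \<in> Omega d L"
  shows "restrict \<alpha> C \<in> constrained_colourings d L"
proof -
  have "\<alpha> x \<in> L x" if "x \<in> C" for x using Omega_D(2)[OF assms] constrained_subset that by blast
  moreover have "inj_on \<alpha> C" by (rule inj_on_subset[OF Omega_D(1)[OF assms] constrained_subset])
  ultimately show ?thesis unfolding constrained_colourings_def by (simp add: restrict_PiE_iff)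
qed

lemma finite_constrained_colourings: "finite (constrained_colourings d L)"
proof -
  have "finite (PiE C L)" using finite_constrained finite_L constrained_subset by (intro finite_PiE) auto
  then show ?thesis unfolding constrained_colourings_def by (rule finite_subset[rotated]) auto
qed

lemma bridging_subset_constrained_colourings: "bridging_colourings C L \<alpha> \<beta> \<subseteq> constrained_colourings d L"
  unfolding bridging_colourings_def constrained_colourings_def by blast

lemma override_on_in_fibre:
  assumes p: "p \<in> constrained_colourings d L"
    and g: "g \<in> ({1..d} - C) \<rightarrow>\<^sub>E (colours d - p ` C)" "inj_on g ({1..d} - C)"
  shows "override_on g p C \<in> Omega d L" "restrict (override_on g p C) C = p"
proof -
  let ?\<alpha> = "override_on g p C"
  have p_L: "p x \<in> L x" if "x \<in> C" for x using p that unfolding constrained_colourings_def by auto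
  have p_undef: "p x = undefined" if "x \<notin> C" for x
    using p that unfolding constrained_colourings_def by (auto simp: PiE_def extensional_def)
  have g_free: "g x \<in> colours d - p ` C" if "x \<in> {1..d} - C" for x using g(1) that by auto
  have used_iff: "?\<alpha> x \<in> p ` C \<longleftrightarrow> x \<in> C" if "x \<in> {1..d}" for x
    using g_free[of x] that by (cases "x \<in> C") auto
  have "?\<alpha> \<in> PiE {1..d} L"
  proof (rule PiE_I)
    fix x assume x: "x \<in> {1..d}"
    show "?\<alpha> x \<in> L x"
      using p_L[of x] g_free[of x] L_free[OF x] x by (cases "x \<in> C") auto
  next
    fix x assume "x \<notin> {1..d}"
    then have "x \<notin> C" "x \<notin> {1..d} - C" using constrained_subset by auto
    then show "?\<alpha> x = undefined" using PiE_arb[OF g(1) \<open>x \<notin> {1..d} - C\<close>] by simp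
  qed
  moreover have "inj_on ?\<alpha> {1..d}"
  proof (rule inj_onI)
    fix x y assume xy: "x \<in> {1..d}" "y \<in> {1..d}" "?\<alpha> x = ?\<alpha> y"
    then have "x \<in> C \<longleftrightarrow> y \<in> C" using used_iff by metis
    then show "x = y"
      using xy inj_onD[OF g(2), of x y] p constrained_subset
      unfolding constrained_colourings_def by (cases "x \<in> C") (auto dest: inj_onD)
  qed
  ultimately show "?\<alpha> \<in> Omega d L" unfolding Omega_def by simp
  show "restrict ?\<alpha> C = p" using p_undef by (auto simp: restrict_def)
qed

lemma fibre_subset_override_on:
  assumes \<alpha>: "\<alpha> \<in> Omega d L" and p: "restrict \<alpha> C = p"
  shows "restrict \<alpha> ({1..d} - C) \<in> ({1..d} - C) \<rightarrow>\<^sub>E (colours d - p ` C)"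
    "inj_on (restrict \<alpha> ({1..d} - C)) ({1..d} - C)"
    "\<alpha> = override_on (restrict \<alpha> ({1..d} - C)) p C"
proof -
  have \<alpha>_C: "p x = \<alpha> x" if "x \<in> C" for x using p that by auto
  have "\<alpha> x \<in> colours d - p ` C" if x: "x \<in> {1..d} - C" for x
  proof -
    have "\<alpha> x \<notin> \<alpha> ` C"
      using x inj_on_image_mem_iff[OF Omega_D(1)[OF \<alpha>] _ constrained_subset, of x] by auto
    moreover have "p ` C = \<alpha> ` C" using \<alpha>_C by simp
    ultimately show ?thesis using Omega_D(2)[OF \<alpha>, of x] L_free[of x] x by auto
  qed
  then show "restrict \<alpha> ({1..d} - C) \<in> ({1..d} - C) \<rightarrow>\<^sub>E (colours d - p ` C)" by auto
  show "inj_on (restrict \<alpha> ({1..d} - C)) ({1..d} - C)"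
    using inj_on_subset[OF Omega_D(1)[OF \<alpha>]] by simp
  show "\<alpha> = override_on (restrict \<alpha> ({1..d} - C)) p C"
  proof
    fix x
    show "\<alpha> x = override_on (restrict \<alpha> ({1..d} - C)) p C x"
      using \<alpha>_C[of x] Omega_D(3)[OF \<alpha>] constrained_subset
      by (cases "x \<in> C"; cases "x \<in> {1..d}") (auto simp: extensional_def)
  qed
qed

lemma card_fibre:
  assumes p: "p \<in> constrained_colourings d L"
  shows "card {\<alpha> \<in> Omega d L. restrict \<alpha> C = p} = free_extension_count d L"
proof -
  let ?F = "{1..d} - C" and ?T = "colours d - p ` C"
  let ?I = "{g \<in> ?F \<rightarrow>\<^sub>E ?T. inj_on g ?F}"
  have "{\<alpha> \<in> Omega d L. restrict \<alpha> C = p} = (\<lambda>g. override_on g p C) ` ?I"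
  proof (intro equalityI subsetI)
    fix \<alpha> assume "\<alpha> \<in> {\<alpha> \<in> Omega d L. restrict \<alpha> C = p}"
    then have "\<alpha> \<in> Omega d L" "restrict \<alpha> C = p" by auto
    from fibre_subset_override_on[OF this] show "\<alpha> \<in> (\<lambda>g. override_on g p C) ` ?I" by blast
  next
    fix \<alpha> assume "\<alpha> \<in> (\<lambda>g. override_on g p C) ` ?I"
    then show "\<alpha> \<in> {\<alpha> \<in> Omega d L. restrict \<alpha> C = p}" using override_on_in_fibre[OF p] by blast
  qed
  moreover have "inj_on (\<lambda>g. override_on g p C) ?I"
    by (rule inj_on_subset[OF inj_on_override_on_PiE[where F = ?F and A = C and p = p and T = "\<lambda>_. ?T"]])
      auto
  ultimately have "card {\<alpha> \<in> Omega d L. restrict \<alpha> C = p} = card ?I" by (simp add: card_image)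
  also have "\<dots> = card ?T ^ (card ?F - card ?F) * prod ((-) (card ?T)) {0..<card ?F}"
    by (rule card_inj_on_subset_funcset) auto
  moreover have card_T: "card ?T = d + 1 - card C"
  proof -
    have "inj_on p C" using p unfolding constrained_colourings_def by auto
    moreover have "p ` C \<subseteq> colours d"
    proof (rule image_subsetI)
      fix x assume "x \<in> C"
      then have "p x \<in> L x" "x \<in> {1..d}"
        using p constrained_subset unfolding constrained_colourings_def by auto
      then show "p x \<in> colours d" using L_subset_colours by blast
    qed
    ultimately show ?thesis by (simp add: card_Diff_subset card_image finite_constrained)
  qed
  moreover have card_F: "card ?F = d - card C"
    using constrained_subset by (simp add: card_Diff_subset finite_constrained)
  ultimately show ?thesis unfolding free_extension_count_def by simp
qed

lemma card_Omega_restrict_in: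
  assumes "X \<subseteq> constrained_colourings d L"
  shows "card {\<alpha> \<in> Omega d L. restrict \<alpha> C \<in> X} = card X * free_extension_count d L"
proof -
  have "finite X" using assms finite_constrained_colourings finite_subset by blast
  have "{\<alpha> \<in> Omega d L. restrict \<alpha> C \<in> X} = (\<Union>p\<in>X. {\<alpha> \<in> Omega d L. restrict \<alpha> C = p})" by auto
  also have "card \<dots> = (\<Sum>p\<in>X. card {\<alpha> \<in> Omega d L. restrict \<alpha> C = p})"
    using \<open>finite X\<close> finite_Omega by (intro card_UN_disjoint) auto
  also have "\<dots> = card X * free_extension_count d L"
    using assms card_fibre by (simp add: subset_eq)
  finally show ?thesis .
qed

lemma card_Omega: "card (Omega d L) = card (constrained_colourings d L) * free_extension_count d L"
proof -
  have "{\<alpha> \<in> Omega d L. restrict \<alpha> C \<in> constrained_colourings d L} = Omega d L"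
    using restrict_in_constrained_colourings by blast
  then show ?thesis using card_Omega_restrict_in[OF subset_refl] by simp
qed

lemma free_extension_count_ge_2: "free_extension_count d L \<ge> 2"
proof -
  define m where "m = card C"
  have "m < d" using card_constrained_less by (simp add: m_def)
  then have "free_extension_count d L = (d + 1 - m) * (\<Prod>i\<in>{1..<d - m}. d + 1 - m - i)"
    unfolding free_extension_count_def m_def[symmetric]
    by (simp add: prod.atLeast_Suc_lessThan)
  moreover have "(\<Prod>i\<in>{1..<d - m}. d + 1 - m - i) \<ge> 1"
  proof (rule prod_ge_1)
    fix i assume "i \<in> {1..<d - m}"
    then show "1 \<le> d + 1 - m - i" unfolding atLeastLessThan_iff by arith
  qed
  moreover have "2 \<le> d + 1 - m" using \<open>m < d\<close> by simp
  ultimately show ?thesis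
    using mult_le_mono[of 2 "d + 1 - m" 1 "\<Prod>i\<in>{1..<d - m}. d + 1 - m - i"] by simp
qed

lemma card_bridging_constrained_ge:
  assumes "inj_on \<alpha> C" "inj_on \<beta> C"
  shows "(\<Prod>x\<in>C. max 1 (card (L x) - 3 * card C)) \<le> card (bridging_colourings C L \<alpha> \<beta>)"
proof (rule card_bridging_colourings_ge[OF finite_constrained _ assms])
  have long: "card C < card (L x)" if "x \<in> C" for x
    using card_constrained_le card_L_constrained[OF that] by linarith
  then show "card C \<le> card (L x)" if "x \<in> C" for x using that by (simp add: less_imp_le)
  show "card C < card (L x) \<or> card C < card (L x')" if "x \<in> C" for x x' using long that by blast
  show "finite (L x)" if "x \<in> C" for x using finite_L constrained_subset that by blast
qed

lemma card_Omega_ge_2: "card (Omega d L) \<ge> 2"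
proof -
  have "1 \<le> (\<Prod>x\<in>C. max 1 (card (L x) - 3 * card C))" by (intro prod_ge_1) auto
  also have "\<dots> \<le> card (bridging_colourings C L id id)" by (rule card_bridging_constrained_ge) auto
  also have "\<dots> \<le> card (constrained_colourings d L)"
    by (rule card_mono[OF finite_constrained_colourings bridging_subset_constrained_colourings])
  finally have "1 * 2 \<le> card (constrained_colourings d L) * free_extension_count d L"
    using free_extension_count_ge_2 by (intro mult_le_mono)
  also have "\<dots> = card (Omega d L)" by (rule card_Omega[symmetric])
  finally show ?thesis by simp
qed

lemma restrict_in_bridging_imp_good:
  assumes \<sigma>: "\<sigma> \<in> Omega d L" and \<eta>: "\<eta> \<in> Omega d L" and \<gamma>: "\<gamma> \<in> Omega d L"
    and bridging: "restrict \<gamma> C \<in> bridging_colourings C L \<sigma> \<eta>"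
  shows "good d L \<sigma> \<gamma>" "good d L \<gamma> \<eta>"
proof -
  have "acyclic_between C \<sigma> (restrict \<gamma> C)" "acyclic_between C (restrict \<gamma> C) \<eta>"
    using bridging unfolding bridging_colourings_def by auto
  then have "acyclic_between C \<sigma> \<gamma>" "acyclic_between C \<gamma> \<eta>"
    using acyclic_between_cong[of C \<sigma> \<sigma> "restrict \<gamma> C" \<gamma>] acyclic_between_cong[of C "restrict \<gamma> C" \<gamma> \<eta> \<eta>]
    by auto
  then show "good d L \<sigma> \<gamma>" "good d L \<gamma> \<eta>"
    using good_iff_acyclic_between[OF \<sigma> \<gamma>] good_iff_acyclic_between[OF \<gamma> \<eta>] by auto
qed

lemma card_Omega_le_two_step_good:
  assumes \<sigma>: "\<sigma> \<in> Omega d L" and \<eta>: "\<eta> \<in> Omega d L"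
  shows "card (Omega d L) \<le> (6 * t) ^ t * card {\<gamma> \<in> Omega d L. good d L \<sigma> \<gamma> \<and> good d L \<gamma> \<eta>}"
proof -
  let ?B = "bridging_colourings C L \<sigma> \<eta>" and ?N = "free_extension_count d L"
  have "card (constrained_colourings d L) \<le> card (PiE C L)"
    using finite_constrained finite_L constrained_subset unfolding constrained_colourings_def
    by (intro card_mono finite_PiE) auto
  also have "\<dots> = (\<Prod>x\<in>C. card (L x))" by (rule card_PiE[OF finite_constrained])
  also have "\<dots> \<le> (6 * t) ^ t * (\<Prod>x\<in>C. max 1 (card (L x) - 3 * card C))"
    using card_constrained_le t_pos by (rule prod_le_pow_mult_prod_max)
  also have "\<dots> \<le> (6 * t) ^ t * card ?B"
    using inj_on_subset[OF Omega_D(1) constrained_subset] \<sigma> \<eta>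
    by (intro mult_le_mono2 card_bridging_constrained_ge) auto
  finally have colourings: "card (constrained_colourings d L) \<le> (6 * t) ^ t * card ?B" .
  have "card (Omega d L) = card (constrained_colourings d L) * ?N" by (rule card_Omega)
  also have "\<dots> \<le> (6 * t) ^ t * card ?B * ?N" using colourings by (rule mult_le_mono1)
  also have "\<dots> = (6 * t) ^ t * card {\<alpha> \<in> Omega d L. restrict \<alpha> C \<in> ?B}"
    using card_Omega_restrict_in[OF bridging_subset_constrained_colourings] by (simp add: mult.assoc)
  also have "\<dots> \<le> (6 * t) ^ t * card {\<gamma> \<in> Omega d L. good d L \<sigma> \<gamma> \<and> good d L \<gamma> \<eta>}"
  proof (intro mult_le_mono2 card_mono)
    show "finite {\<gamma> \<in> Omega d L. good d L \<sigma> \<gamma> \<and> good d L \<gamma> \<eta>}" using finite_Omega by simp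
    show "{\<alpha> \<in> Omega d L. restrict \<alpha> C \<in> ?B} \<subseteq> {\<gamma> \<in> Omega d L. good d L \<sigma> \<gamma> \<and> good d L \<gamma> \<eta>}"
      using restrict_in_bridging_imp_good[OF \<sigma> \<eta>] by blast
  qed
  finally show ?thesis .
qed

end

theorem lemma12:
  fixes t :: nat
  assumes "t \<ge> 1"
  shows "\<exists>C::real. \<forall>d::nat. \<forall>L :: nat \<Rightarrow> nat set.
           d \<ge> 1 \<longrightarrow> t_feasible t d L \<longrightarrow>
           relax_time (Omega d L) (rate_int d L) \<le> C * relax_time (Omega d L) (rate_unif d L)"
proof (intro exI[of _ "4 * real ((6 * t) ^ t)"] allI impI)
  fix d :: nat and L :: "nat \<Rightarrow> nat set"
  assume "d \<ge> 1" "t_feasible t d L"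
  then interpret feasible_lists t d L using assms by unfold_locales
  have uniform: "relax_time (Omega d L) (rate_unif d L) = 1"
    using finite_Omega card_Omega_ge_2 by (rule relax_time_uniform) (simp add: rate_unif_def)
  have "relax_time (Omega d L) (rate_int d L) \<le> 4 * real ((6 * t) ^ t)"
  proof (rule relax_time_two_step_bound[OF finite_Omega card_Omega_ge_2])
    show "rate_int d L a b = (if a \<noteq> b \<and> good d L a b then 1 / card (Omega d L) else 0)" for a b
      by (simp add: rate_int_def)
    show "good d L a b = good d L b a" if "a \<in> Omega d L" "b \<in> Omega d L" for a b
      using good_sym[OF that] .
    show "real (card (Omega d L)) \<le> real ((6 * t) ^ t) * card {c \<in> Omega d L. good d L a c \<and> good d L c b}"
      if "a \<in> Omega d L" "b \<in> Omega d L" for a b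
      using card_Omega_le_two_step_good[OF that] by (metis of_nat_le_iff of_nat_mult)
  qed (use assms in simp)
  then show "relax_time (Omega d L) (rate_int d L) \<le> 4 * real ((6 * t) ^ t) * relax_time (Omega d L) (rate_unif d L)"
    using uniform by simp
qed

end
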